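(* Let $f:\mathbb{R}^n\to(-\infty,+\infty]$ be proper, lower semicontinuous and prox-bounded with threshold $\lambda_f>0$, and let $g:\mathbb{R}^n\to\mathbb{R}$ be convex and differentiable with Lipschitz continuous gradient. Suppose $f$ is variationally convex at $\bar x$ for $-\nabla g(\bar x)\in\partial f(\bar x)$. For $\lambda>0$ let $T:=P_\lambda f\circ(\mathrm{Id}-\lambda\nabla g)$. Then $\bar x$ is a local minimizer of $f+g$, and there exists $0<\bar\lambda\le\lambda_f$ such that: (i) for every $\lambda\in(0,\bar\lambda)$ there is a neighborhood $U_\lambda$ of $\bar x$ such that $T$ maps $U_\lambda$ into $U_\lambda$ (single-valuedly), $T$ is averaged on $U_\lambda$, and $T(\bar x)=\bar x$; (ii) for $x_1\in U_\lambda$, the sequence $x_{k+1}:=Tx_k$ converges to some $x^*\in U_\lambda$ satisfying $0\in\nabla g(x^* )+\partial_p^\lambda f(x^* )$; (iii) if in addition $f$ is variationally strongly convex at $\bar x$ for $-\nabla g(\bar x)$, then, after choosing a smaller neighborhood $U_\lambda$, the sequence in (ii) converges linearly to $\bar x$.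
   Context: $P_\lambda f(x):=\operatorname{argmin}_y\{f(y)+\frac1{2\lambda}\|y-x\|^2\}$; $e_\lambda f$ the corresponding infimal value. Prox-bounded with threshold $\lambda_f$: $\lambda_f=\sup\{\lambda>0: e_\lambda f(x)>-\infty\text{ for some }x\}>0$. $v\in\partial_p^\lambda f(x)$ iff $x\in\operatorname{dom}f$ and $f(y)\ge f(x)+\langle v,y-x\rangle-\frac1{2\lambda}\|y-x\|^2$ for all $y$. $\partial f$ is the limiting subdifferential. Variational convexity of $f$ at $\bar x$ for $\bar v\in\partial f(\bar x)$: for some convex neighborhood $U\times V$ of $(\bar x,\bar v)$ there are a lsc convex $\varphi\le f$ on $U$ and $\varepsilon>0$ with $[U_\varepsilon\times V]\cap\operatorname{gph}\partial f=[U\times V]\cap\operatorname{gph}\partial\varphi$ and $f=\varphi$ at common elements, $U_\varepsilon=\{x\in U:f(x)<f(\bar x)+\varepsilon\}$; variational strong convexity is the same with $\varphi$ strongly convex (with some modulus $\sigma>0$). $T$ averaged on $U$: $T=(1-\alpha)\mathrm{Id}+\alpha N$ for some $\alpha\in(0,1)$ and $N$ nonexpansive on $U$. *)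

theory Defs
  imports "HOL-Analysis.Analysis"
begin

text \<open>Extended-real valued functions f :: 'a \<Rightarrow> ereal on a Euclidean space 'a (= R^n).
  Functions into (-inf,+inf] are modelled by ereal-valued functions never taking -inf.\<close>

definition proper_fun :: "('a \<Rightarrow> ereal) \<Rightarrow> bool" where
  "proper_fun f \<longleftrightarrow> (\<forall>x. f x \<noteq> -\<infinity>) \<and> (\<exists>x. f x < \<infinity>)"

definition lsc_fun :: "('a::topological_space \<Rightarrow> ereal) \<Rightarrow> bool" where
  "lsc_fun f \<longleftrightarrow> (\<forall>x c. c < f x \<longrightarrow> eventually (\<lambda>y. c < f y) (nhds x))"

definition ereal_convex :: "('a::real_vector \<Rightarrow> ereal) \<Rightarrow> bool" where
  "ereal_convex \<phi> \<longleftrightarrow> (\<forall>x y t. 0 < t \<and> t < 1 \<longrightarrow>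
      \<phi> ((1 - t) *\<^sub>R x + t *\<^sub>R y) \<le> ereal (1 - t) * \<phi> x + ereal t * \<phi> y)"

definition ereal_strongly_convex :: "real \<Rightarrow> ('a::real_normed_vector \<Rightarrow> ereal) \<Rightarrow> bool" where
  "ereal_strongly_convex \<sigma> \<phi> \<longleftrightarrow> ereal_convex (\<lambda>x. \<phi> x - ereal (\<sigma> / 2 * (norm x)\<^sup>2))"

definition moreau_env :: "real \<Rightarrow> ('a::real_normed_vector \<Rightarrow> ereal) \<Rightarrow> 'a \<Rightarrow> ereal" where
  "moreau_env lam f x = (INF y. f y + ereal ((norm (y - x))\<^sup>2 / (2 * lam)))"

definition prox_map :: "real \<Rightarrow> ('a::real_normed_vector \<Rightarrow> ereal) \<Rightarrow> 'a \<Rightarrow> 'a set" where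
  "prox_map lam f x = {y. \<forall>z. f y + ereal ((norm (y - x))\<^sup>2 / (2 * lam))
                           \<le> f z + ereal ((norm (z - x))\<^sup>2 / (2 * lam))}"

definition prox_bounded :: "('a::real_normed_vector \<Rightarrow> ereal) \<Rightarrow> bool" where
  "prox_bounded f \<longleftrightarrow> (\<exists>lam>0. \<exists>x. moreau_env lam f x > -\<infinity>)"

definition prox_threshold :: "('a::real_normed_vector \<Rightarrow> ereal) \<Rightarrow> ereal" where
  "prox_threshold f = Sup {ereal lam | lam. lam > 0 \<and> (\<exists>x. moreau_env lam f x > -\<infinity>)}"

definition prox_subdiff :: "real \<Rightarrow> ('a::real_inner \<Rightarrow> ereal) \<Rightarrow> 'a \<Rightarrow> 'a set" where
  "prox_subdiff lam f x = {v. f x < \<infinity> \<and>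
     (\<forall>y. f y \<ge> f x + ereal (inner v (y - x) - (norm (y - x))\<^sup>2 / (2 * lam)))}"

definition frechet_subdiff :: "('a::real_inner \<Rightarrow> ereal) \<Rightarrow> 'a \<Rightarrow> 'a set" where
  "frechet_subdiff f x = {v. \<bar>f x\<bar> \<noteq> \<infinity> \<and>
     (\<forall>e>0. \<exists>d>0. \<forall>y. norm (y - x) < d \<longrightarrow>
        f y \<ge> f x + ereal (inner v (y - x) - e * norm (y - x)))}"

definition limiting_subdiff :: "('a::real_inner \<Rightarrow> ereal) \<Rightarrow> 'a \<Rightarrow> 'a set" where
  "limiting_subdiff f x = {v. \<exists>xs vs. xs \<longlonglongrightarrow> x \<and> (\<lambda>k. f (xs k)) \<longlonglongrightarrow> f x \<and>
     (\<forall>k. vs k \<in> frechet_subdiff f (xs k)) \<and> vs \<longlonglongrightarrow> v}"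

definition var_convex_with :: "(('a::real_inner \<Rightarrow> ereal) \<Rightarrow> bool) \<Rightarrow> ('a \<Rightarrow> ereal) \<Rightarrow> 'a \<Rightarrow> 'a \<Rightarrow> bool" where
  "var_convex_with Q f xb vb \<longleftrightarrow> vb \<in> limiting_subdiff f xb \<and>
    (\<exists>U V \<phi> \<epsilon>. convex U \<and> convex V \<and> xb \<in> interior U \<and> vb \<in> interior V \<and>
       (\<forall>x. \<phi> x \<noteq> -\<infinity>) \<and> lsc_fun \<phi> \<and> Q \<phi> \<and> (\<forall>x\<in>U. \<phi> x \<le> f x) \<and> \<epsilon> > 0 \<and>
       (\<forall>x v. (x \<in> U \<and> f x < f xb + ereal \<epsilon> \<and> v \<in> V \<and> v \<in> limiting_subdiff f x)
              \<longleftrightarrow> (x \<in> U \<and> v \<in> V \<and> v \<in> limiting_subdiff \<phi> x)) \<and>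
       (\<forall>x v. x \<in> U \<and> v \<in> V \<and> v \<in> limiting_subdiff \<phi> x \<longrightarrow> f x = \<phi> x))"

definition var_convex :: "('a::real_inner \<Rightarrow> ereal) \<Rightarrow> 'a \<Rightarrow> 'a \<Rightarrow> bool" where
  "var_convex f xb vb \<longleftrightarrow> var_convex_with ereal_convex f xb vb"

definition var_strongly_convex :: "('a::real_inner \<Rightarrow> ereal) \<Rightarrow> 'a \<Rightarrow> 'a \<Rightarrow> bool" where
  "var_strongly_convex f xb vb \<longleftrightarrow>
     var_convex_with (\<lambda>\<phi>. \<exists>\<sigma>>0. ereal_strongly_convex \<sigma> \<phi>) f xb vb"

definition fb_averaged_on :: "real \<Rightarrow> ('a::euclidean_space \<Rightarrow> ereal) \<Rightarrow> ('a \<Rightarrow> 'a) \<Rightarrow> 'a set \<Rightarrow> bool" where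
  "fb_averaged_on lam f G U \<longleftrightarrow>
    (\<forall>x\<in>U. \<exists>y\<in>U. prox_map lam f (x - lam *\<^sub>R G x) = {y}) \<and>
    (\<exists>\<alpha> N. 0 < \<alpha> \<and> \<alpha> < 1 \<and> (\<forall>x\<in>U. \<forall>y\<in>U. norm (N x - N y) \<le> norm (x - y)) \<and>
       (\<forall>x\<in>U. prox_map lam f (x - lam *\<^sub>R G x) = {(1 - \<alpha>) *\<^sub>R x + \<alpha> *\<^sub>R N x}))"

definition fb_seq :: "real \<Rightarrow> ('a::euclidean_space \<Rightarrow> ereal) \<Rightarrow> ('a \<Rightarrow> 'a) \<Rightarrow> (nat \<Rightarrow> 'a) \<Rightarrow> bool" where
  "fb_seq lam f G xs \<longleftrightarrow> (\<forall>k. prox_map lam f (xs k - lam *\<^sub>R G (xs k)) = {xs (Suc k)})"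

end

theory Submission
  imports Defs
begin

text \<open>
  Variational convexity of \<open>f\<close> at \<open>xb\<close> for \<open>vb = -\<nabla>g(xb)\<close> yields a convex (strongly convex)
  model \<open>\<phi> \<le> f\<close> near \<open>xb\<close> whose limiting subgradients contain those of \<open>f\<close> on a localized
  graph. The subgradient inequality of \<open>\<phi>\<close> at \<open>xb\<close> together with convexity of \<open>g\<close> shows that
  \<open>xb\<close> is a local minimizer of \<open>f + g\<close>; glued with the quadratic minorant coming from
  prox-boundedness it makes \<open>vb\<close> a global proximal subgradient of \<open>f\<close> for some parameter \<open>\<mu>\<close>.
  Hence for \<open>\<lambda> \<le> \<mu>/2\<close> the prox of \<open>xb + \<lambda> vb\<close> is exactly \<open>xb\<close>, prox points of nearby points
  stay near \<open>xb\<close>, and their proximal subgradients are subgradients of \<open>\<phi>\<close>. So near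
  \<open>xb + \<lambda> vb\<close> the proximal mapping is single-valued and behaves like the resolvent of
  \<open>\<partial>\<phi>\<close>: firmly nonexpansive, and a contraction towards \<open>xb\<close> with factor \<open>1/(1 + \<lambda>\<sigma>)\<close> if
  \<open>\<phi>\<close> is \<open>\<sigma>\<close>-strongly convex. By the Baillon--Haddad theorem \<open>\<nabla>g\<close> is \<open>\<beta>\<close>-cocoercive, so for
  \<open>\<lambda> \<le> \<beta>\<close> the forward step is nonexpansive and \<open>T = P\<^sub>\<lambda>f \<circ> (Id - \<lambda>\<nabla>g)\<close> is
  \<open>2/3\<close>-averaged on a ball around \<open>xb\<close>. Fej\'er monotonicity and compactness then give
  convergence of the iterates to a fixed point, which is exactly the optimality condition
  \<open>-\<nabla>g(x\<^sup>*) \<in> \<partial>\<^sub>p\<^sup>\<lambda>f(x\<^sup>*)\<close>; in the strongly convex case the contraction gives linear convergence.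
\<close>

section \<open>Inner product inequalities\<close>

lemma norm_add_square:
  fixes a b :: "'a::real_inner"
  shows "(norm (a + b))\<^sup>2 = (norm a)\<^sup>2 + 2 * inner a b + (norm b)\<^sup>2"
  by (simp add: power2_norm_eq_inner inner_add_left inner_add_right inner_commute)

lemma norm_diff_square:
  fixes a b :: "'a::real_inner"
  shows "(norm (a - b))\<^sup>2 = (norm a)\<^sup>2 - 2 * inner a b + (norm b)\<^sup>2"
  by (simp add: power2_norm_eq_inner inner_diff_left inner_diff_right inner_commute)

lemma norm_diff_scaleR_square:
  fixes u v :: "'a::real_inner"
  shows "(norm (u - c *\<^sub>R v))\<^sup>2 = (norm u)\<^sup>2 - 2 * c * inner u v + c\<^sup>2 * (norm v)\<^sup>2"
  using norm_add_square[of u "- c *\<^sub>R v"] by (simp add: power_mult_distrib)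

lemma strongly_monotone_norm_bound:
  fixes a b :: "'a::real_inner"
  assumes "(1 + k) * (norm a)\<^sup>2 \<le> inner b a" and "0 \<le> k"
  shows "norm a \<le> norm b / (1 + k)"
proof (cases "a = 0")
  case True
  have "0 \<le> norm b / (1 + k)"
    using \<open>0 \<le> k\<close> by (intro divide_nonneg_nonneg) auto
  then show ?thesis
    using True by simp
next
  case False
  have "((1 + k) * norm a) * norm a \<le> norm b * norm a"
    using assms(1) norm_cauchy_schwarz[of b a] by (simp add: power2_eq_square mult.assoc)
  then have "(1 + k) * norm a \<le> norm b"
    using False by simp
  then show ?thesis
    using \<open>0 \<le> k\<close> by (simp add: field_simps)
qed

lemma inner_le_quadratic:
  fixes v h :: "'a::real_inner"
  assumes "0 < mu"
  shows "inner v h \<le> (norm h)\<^sup>2 / (2 * mu) + mu * (norm v)\<^sup>2 / 2"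
proof -
  have "0 \<le> (norm h - mu * norm v)\<^sup>2"
    by simp
  then have "2 * mu * (norm v * norm h) \<le> (norm h)\<^sup>2 + mu\<^sup>2 * (norm v)\<^sup>2"
    by (simp add: power2_eq_square algebra_simps)
  then have "norm v * norm h \<le> (norm h)\<^sup>2 / (2 * mu) + mu * (norm v)\<^sup>2 / 2"
    using assms by (simp add: field_simps power2_eq_square)
  then show ?thesis
    using norm_cauchy_schwarz[of v h] by linarith
qed

lemma quadratic_dominates_affine:
  fixes A B t :: real
  assumes "0 < \<rho>" "0 \<le> A" "0 \<le> B" "\<rho> \<le> t"
  shows "A + B * t \<le> (A / \<rho>\<^sup>2 + B / \<rho>) * t\<^sup>2"
proof -
  have "A * \<rho>\<^sup>2 \<le> A * t\<^sup>2"
    using assms by (intro mult_left_mono power_mono) auto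
  then have "A \<le> A / \<rho>\<^sup>2 * t\<^sup>2"
    using assms by (simp add: field_simps)
  moreover have "B * t \<le> B / \<rho> * t\<^sup>2"
    using assms mult_left_mono[of \<rho> t t] by (simp add: field_simps power2_eq_square mult_left_mono)
  ultimately show ?thesis
    by (simp add: distrib_right)
qed

lemma quadratic_minorant_far:
  fixes v h d :: "'a::real_inner"
  assumes "0 < lam0" "0 < \<rho>" "\<rho> \<le> norm h" "0 < mu"
    and mu: "(\<bar>c\<bar> + (norm d)\<^sup>2 / lam0) / \<rho>\<^sup>2 + norm v / \<rho> + 1 / lam0 \<le> 1 / (2 * mu)"
  shows "c + inner v h - (norm h)\<^sup>2 / (2 * mu) \<le> - (norm (h + d))\<^sup>2 / (2 * lam0)"
proof -
  define A where "A = \<bar>c\<bar> + (norm d)\<^sup>2 / lam0"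
  define K where "K = A / \<rho>\<^sup>2 + norm v / \<rho>"
  have "(norm (h + d))\<^sup>2 \<le> (norm h + norm d)\<^sup>2"
    using norm_triangle_ineq[of h d] by (simp add: power_mono)
  also have "\<dots> \<le> 2 * (norm h)\<^sup>2 + 2 * (norm d)\<^sup>2"
    using sum_squares_bound[of "norm h" "norm d"] by (simp add: power2_eq_square algebra_simps)
  finally have far: "(norm (h + d))\<^sup>2 / (2 * lam0) \<le> (norm h)\<^sup>2 / lam0 + (norm d)\<^sup>2 / lam0"
    using \<open>0 < lam0\<close> by (simp add: field_simps)
  have "A + norm v * norm h \<le> K * (norm h)\<^sup>2"
    unfolding K_def using assms
    by (intro quadratic_dominates_affine) (auto simp: A_def)
  moreover have "(K + 1 / lam0) * (norm h)\<^sup>2 \<le> (norm h)\<^sup>2 / (2 * mu)"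
    using mu mult_right_mono[OF mu, of "(norm h)\<^sup>2"] unfolding K_def A_def by simp
  moreover have "inner v h \<le> norm v * norm h"
    by (rule norm_cauchy_schwarz)
  ultimately have "c + inner v h - (norm h)\<^sup>2 / (2 * mu) \<le> c - A - (norm h)\<^sup>2 / lam0"
    by (simp add: algebra_simps)
  then show ?thesis
    using far unfolding A_def by (simp add: field_simps)
qed

section \<open>Convex functions with Lipschitz gradient\<close>

lemma has_derivative_along_line:
  assumes "\<And>x. (g has_derivative (\<lambda>h. inner (G x) h)) (at x)"
  shows "((\<lambda>t. g (x + t *\<^sub>R h)) has_derivative (\<lambda>s. s * inner (G (x + t *\<^sub>R h)) h)) (at t within S)"
proof -
  have "((\<lambda>t. x + t *\<^sub>R h) has_derivative (\<lambda>s. s *\<^sub>R h)) (at t within S)"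
    by (auto intro!: derivative_eq_intros)
  moreover have "(g has_derivative (\<lambda>k. inner (G (x + t *\<^sub>R h)) k))
      (at (x + t *\<^sub>R h) within (\<lambda>t. x + t *\<^sub>R h) ` S)"
    using assms has_derivative_at_withinI by blast
  ultimately show ?thesis
    using has_derivative_in_compose by (fastforce simp: o_def)
qed

lemma convex_on_gradient_ineq:
  fixes g :: "'a::real_inner \<Rightarrow> real"
  assumes g_convex: "convex_on UNIV g"
    and g_grad: "\<And>x. (g has_derivative (\<lambda>h. inner (G x) h)) (at x)"
  shows "g x + inner (G x) (y - x) \<le> g y"
proof -
  let ?p = "\<lambda>t. g (x + t *\<^sub>R (y - x))"
  have cvx: "convex_on UNIV ?p"
  proof (rule convex_onI)
    fix u s t :: real assume "0 < u" "u < 1"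
    have "x + ((1 - u) *\<^sub>R s + u *\<^sub>R t) *\<^sub>R (y - x)
        = (1 - u) *\<^sub>R (x + s *\<^sub>R (y - x)) + u *\<^sub>R (x + t *\<^sub>R (y - x))"
      by (simp add: algebra_simps)
    then show "?p ((1 - u) *\<^sub>R s + u *\<^sub>R t) \<le> (1 - u) * ?p s + u * ?p t"
      using convex_onD[OF g_convex, of u] \<open>0 < u\<close> \<open>u < 1\<close> by simp
  qed simp
  have deriv: "(?p has_field_derivative inner (G x) (y - x)) (at 0 within UNIV)"
    using has_derivative_along_line[OF g_grad, of x "y - x" 0 UNIV]
    by (simp add: has_field_derivative_def mult_commute_abs)
  have "?p 1 - ?p 0 \<ge> inner (G x) (y - x) * (1 - 0)"
    by (rule convex_on_imp_above_tangent[OF cvx _ _ _ deriv]) auto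
  then show ?thesis by simp
qed

lemma lipschitz_gradient_upper_bound:
  assumes g_grad: "\<And>x. (g has_derivative (\<lambda>h. inner (G x) h)) (at x)"
    and G_lip: "\<And>x y. norm (G x - G y) \<le> L * norm (x - y)" and "0 \<le> L"
  shows "g y \<le> g x + inner (G x) (y - x) + L * (norm (y - x))\<^sup>2"
proof -
  obtain t where t: "t \<in> {0<..<1}"
    and mvt: "g y - g x = inner (G (x + t *\<^sub>R (y - x))) (y - x)"
    using mvt_simple[of 0 1 "\<lambda>t. g (x + t *\<^sub>R (y - x))"
        "\<lambda>t s. s * inner (G (x + t *\<^sub>R (y - x))) (y - x)"]
      has_derivative_along_line[OF g_grad] by auto
  have "inner (G (x + t *\<^sub>R (y - x)) - G x) (y - x)
      \<le> norm (G (x + t *\<^sub>R (y - x)) - G x) * norm (y - x)"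
    by (rule norm_cauchy_schwarz)
  also have "\<dots> \<le> L * (t * norm (y - x)) * norm (y - x)"
    using G_lip[of "x + t *\<^sub>R (y - x)" x] t by (intro mult_right_mono) auto
  also have "\<dots> = t * (L * (norm (y - x))\<^sup>2)"
    by (simp add: power2_eq_square)
  also have "\<dots> \<le> L * (norm (y - x))\<^sup>2"
    using t \<open>0 \<le> L\<close> by (intro mult_left_le_one_le) auto
  finally show ?thesis
    using mvt by (simp add: inner_diff_left)
qed

lemma lipschitz_gradient_lower_bound:
  assumes g_convex: "convex_on UNIV g"
    and g_grad: "\<And>x. (g has_derivative (\<lambda>h. inner (G x) h)) (at x)"
    and G_lip: "\<And>x y. norm (G x - G y) \<le> L * norm (x - y)" and "0 < L"
  shows "g x + inner (G x) (y - x) + (norm (G y - G x))\<^sup>2 / (4 * L) \<le> g y"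
proof -
  define t where "t = 1 / (2 * L)"
  define w where "w = y - t *\<^sub>R (G y - G x)"
  have "g x + inner (G x) (w - x) \<le> g w"
    by (rule convex_on_gradient_ineq[OF g_convex g_grad])
  also have "\<dots> \<le> g y + inner (G y) (w - y) + L * (norm (w - y))\<^sup>2"
    using lipschitz_gradient_upper_bound[OF g_grad G_lip] \<open>0 < L\<close> by simp
  finally have "g x + inner (G x) (y - x) - t * inner (G x) (G y - G x)
      \<le> g y - t * inner (G y) (G y - G x) + L * (t\<^sup>2 * (norm (G y - G x))\<^sup>2)"
    unfolding w_def by (simp add: inner_diff_right power_mult_distrib)
  moreover have "t * (norm (G y - G x))\<^sup>2 = t * inner (G y) (G y - G x) - t * inner (G x) (G y - G x)"
    by (simp add: power2_norm_eq_inner inner_diff_left right_diff_distrib)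
  moreover have "(t - L * t\<^sup>2) * (norm (G y - G x))\<^sup>2
      = t * (norm (G y - G x))\<^sup>2 - L * (t\<^sup>2 * (norm (G y - G x))\<^sup>2)"
    by (simp add: algebra_simps)
  ultimately have "g x + inner (G x) (y - x) + (t - L * t\<^sup>2) * (norm (G y - G x))\<^sup>2 \<le> g y"
    by linarith
  moreover have "t - L * t\<^sup>2 = 1 / (4 * L)"
    unfolding t_def using \<open>0 < L\<close> by (simp add: field_simps power2_eq_square)
  ultimately show ?thesis by simp
qed

lemma convex_lipschitz_gradient_cocoercive:
  assumes g_convex: "convex_on UNIV g"
    and g_grad: "\<And>x. (g has_derivative (\<lambda>h. inner (G x) h)) (at x)"
    and G_lip: "\<exists>L. \<forall>x y. norm (G x - G y) \<le> L * norm (x - y)"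
  obtains \<beta> where "0 < \<beta>" "\<And>x y. \<beta> * (norm (G x - G y))\<^sup>2 \<le> inner (G x - G y) (x - y)"
proof -
  obtain L0 where L0: "\<And>x y. norm (G x - G y) \<le> L0 * norm (x - y)"
    using G_lip by blast
  define L where "L = max L0 1"
  have L: "norm (G x - G y) \<le> L * norm (x - y)" for x y
    using L0[of x y] unfolding L_def by (meson max.cobounded1 mult_right_mono norm_ge_zero order_trans)
  have "0 < L" unfolding L_def by simp
  note bound = lipschitz_gradient_lower_bound[OF g_convex g_grad L this]
  show thesis
  proof
    show "0 < 1 / (2 * L)" using \<open>0 < L\<close> by simp
    fix x y
    have "inner (G x - G y) (x - y) = - inner (G x) (y - x) - inner (G y) (x - y)"
      by (simp add: inner_diff_left inner_diff_right inner_commute)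
    then show "1 / (2 * L) * (norm (G x - G y))\<^sup>2 \<le> inner (G x - G y) (x - y)"
      using bound[of x y] bound[of y x] by (simp add: norm_minus_commute field_simps)
  qed
qed

lemma cocoercive_forward_step_nonexpansive:
  assumes coc: "\<And>x y. \<beta> * (norm (G x - G y))\<^sup>2 \<le> inner (G x - G y) (x - y)"
    and "0 < lam" "lam \<le> \<beta>"
  shows "norm ((x - lam *\<^sub>R G x) - (y - lam *\<^sub>R G y)) \<le> norm (x - y)"
proof -
  have "lam * (norm (G x - G y))\<^sup>2 \<le> \<beta> * (norm (G x - G y))\<^sup>2"
    using \<open>lam \<le> \<beta>\<close> by (intro mult_right_mono) auto
  then have coc_lam: "lam * (norm (G x - G y))\<^sup>2 \<le> inner (G x - G y) (x - y)"
    using coc[of x y] by linarith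
  then have "lam * (lam * (norm (G x - G y))\<^sup>2) \<le> lam * inner (G x - G y) (x - y)"
    using \<open>0 < lam\<close> by simp
  moreover have "0 \<le> inner (G x - G y) (x - y)"
    using coc_lam \<open>0 < lam\<close> by (smt (verit) mult_nonneg_nonneg zero_le_power2)
  then have "0 \<le> lam * inner (G x - G y) (x - y)"
    using \<open>0 < lam\<close> by simp
  moreover have "lam\<^sup>2 * (norm (G x - G y))\<^sup>2 = lam * (lam * (norm (G x - G y))\<^sup>2)"
    by (simp add: power2_eq_square)
  moreover have "2 * lam * inner (x - y) (G x - G y) = 2 * (lam * inner (G x - G y) (x - y))"
    by (simp add: inner_commute)
  ultimately have "(norm ((x - y) - lam *\<^sub>R (G x - G y)))\<^sup>2 \<le> (norm (x - y))\<^sup>2"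
    unfolding norm_diff_scaleR_square by linarith
  moreover have "(x - lam *\<^sub>R G x) - (y - lam *\<^sub>R G y) = (x - y) - lam *\<^sub>R (G x - G y)"
    by (simp add: algebra_simps)
  ultimately show ?thesis
    by (metis power2_le_imp_le norm_ge_zero)
qed

section \<open>Subgradients of strongly convex functions\<close>

lemma frechet_subdiff_imp_limiting_subdiff:
  "v \<in> frechet_subdiff f x \<Longrightarrow> v \<in> limiting_subdiff f x"
  unfolding limiting_subdiff_def by (intro CollectI exI[of _ "\<lambda>_. x"] exI[of _ "\<lambda>_. v"]) auto

lemma prox_subdiff_finite_iff:
  assumes "f x = ereal a"
  shows "v \<in> prox_subdiff lam f x \<longleftrightarrow>
    (\<forall>y. ereal (a + inner v (y - x) - (norm (y - x))\<^sup>2 / (2 * lam)) \<le> f y)"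
  using assms unfolding prox_subdiff_def by (simp add: add_diff_eq)

lemma prox_subdiff_imp_frechet_subdiff:
  assumes "0 < lam" "f x \<noteq> -\<infinity>" and v: "v \<in> prox_subdiff lam f x"
  shows "v \<in> frechet_subdiff f x"
  unfolding frechet_subdiff_def
proof (intro CollectI conjI allI impI)
  show "\<bar>f x\<bar> \<noteq> \<infinity>"
    using v \<open>f x \<noteq> -\<infinity>\<close> unfolding prox_subdiff_def by auto
  fix e :: real assume "0 < e"
  show "\<exists>d>0. \<forall>y. norm (y - x) < d \<longrightarrow> f x + ereal (inner v (y - x) - e * norm (y - x)) \<le> f y"
  proof (intro exI[of _ "2 * lam * e"] conjI allI impI)
    show "0 < 2 * lam * e" using \<open>0 < lam\<close> \<open>0 < e\<close> by simp
    fix y assume y: "norm (y - x) < 2 * lam * e"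
    have "norm (y - x) * norm (y - x) \<le> (2 * lam * e) * norm (y - x)"
      using y by (intro mult_right_mono) auto
    then have "(norm (y - x))\<^sup>2 / (2 * lam) \<le> e * norm (y - x)"
      using \<open>0 < lam\<close> by (simp add: field_simps power2_eq_square)
    then have "f x + ereal (inner v (y - x) - e * norm (y - x))
        \<le> f x + ereal (inner v (y - x) - (norm (y - x))\<^sup>2 / (2 * lam))"
      by (intro add_left_mono) simp
    also have "\<dots> \<le> f y"
      using v unfolding prox_subdiff_def by blast
    finally show "f x + ereal (inner v (y - x) - e * norm (y - x)) \<le> f y" .
  qed
qed

lemma prox_map_imp_prox_subdiff:
  assumes "0 < lam" "proper_fun f" and y: "y \<in> prox_map lam f z"
  shows "(1 / lam) *\<^sub>R (z - y) \<in> prox_subdiff lam f y"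
proof -
  have min: "f y + ereal ((norm (y - z))\<^sup>2 / (2 * lam)) \<le> f w + ereal ((norm (w - z))\<^sup>2 / (2 * lam))"
    for w
    using y unfolding prox_map_def by blast
  obtain w0 where "f w0 < \<infinity>"
    using \<open>proper_fun f\<close> unfolding proper_fun_def by blast
  then have "f y \<noteq> \<infinity>"
    using min[of w0] by auto
  moreover have "f y \<noteq> -\<infinity>"
    using \<open>proper_fun f\<close> unfolding proper_fun_def by blast
  ultimately obtain a where a: "f y = ereal a" by (cases "f y") auto
  show ?thesis
    unfolding prox_subdiff_finite_iff[where f = f, OF a]
  proof
    fix w
    have "inner (w - y) (y - z) = - inner (z - y) (w - y)"
      by (metis inner_commute inner_minus_left minus_diff_eq)
    then have nwz: "(norm (w - z))\<^sup>2 = (norm (w - y))\<^sup>2 - 2 * inner (z - y) (w - y) + (norm (y - z))\<^sup>2"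
      using norm_add_square[of "w - y" "y - z"] by simp
    have "inner ((1 / lam) *\<^sub>R (z - y)) (w - y) = inner (z - y) (w - y) / lam"
      by simp
    then have "inner ((1 / lam) *\<^sub>R (z - y)) (w - y) - (norm (w - y))\<^sup>2 / (2 * lam)
        = (norm (y - z))\<^sup>2 / (2 * lam) - (norm (w - z))\<^sup>2 / (2 * lam)"
      unfolding nwz using \<open>0 < lam\<close> by (simp add: field_simps)
    then show "ereal (a + inner ((1 / lam) *\<^sub>R (z - y)) (w - y) - (norm (w - y))\<^sup>2 / (2 * lam)) \<le> f w"
      using min[of w] a by (cases "f w") auto
  qed
qed

lemma ereal_strongly_convex_segment:
  fixes \<phi> :: "'a::real_inner \<Rightarrow> ereal"
  assumes "ereal_strongly_convex \<sigma> \<phi>" "\<phi> x = ereal a" "\<phi> y = ereal b" "0 < t" "t < 1"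
  shows "\<phi> (x + t *\<^sub>R (y - x)) \<le> ereal ((1 - t) * a + t * b - \<sigma> / 2 * (t * (1 - t)) * (norm (y - x))\<^sup>2)"
proof -
  define q where "q w = \<sigma> / 2 * (norm w)\<^sup>2" for w :: 'a
  have seg: "(1 - t) *\<^sub>R x + t *\<^sub>R y = x + t *\<^sub>R (y - x)"
    by (simp add: algebra_simps)
  have le: "\<phi> (x + t *\<^sub>R (y - x)) - ereal (q (x + t *\<^sub>R (y - x)))
      \<le> ereal ((1 - t) * (a - q x) + t * (b - q y))"
    using assms unfolding ereal_strongly_convex_def ereal_convex_def q_def seg[symmetric]
    by (metis ereal_minus(1) times_ereal.simps(1) plus_ereal.simps(1))
  have qid: "(1 - t) * q x + t * q y - q (x + t *\<^sub>R (y - x))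
      = \<sigma> / 2 * (t * (1 - t)) * (norm (y - x))\<^sup>2"
  proof -
    have ny: "(norm y)\<^sup>2 = (norm x)\<^sup>2 + 2 * inner x (y - x) + (norm (y - x))\<^sup>2"
      using norm_add_square[of x "y - x"] by simp
    have nt: "(norm (x + t *\<^sub>R (y - x)))\<^sup>2
        = (norm x)\<^sup>2 + 2 * t * inner x (y - x) + t\<^sup>2 * (norm (y - x))\<^sup>2"
      using norm_add_square[of x "t *\<^sub>R (y - x)"] by (simp add: power_mult_distrib)
    show ?thesis
      unfolding q_def ny nt by (simp add: field_simps power2_eq_square)
  qed
  have expand: "(1 - t) * (a - q x) + t * (b - q y) = (1 - t) * a + t * b - ((1 - t) * q x + t * q y)"
    by (simp add: algebra_simps)
  show ?thesis
  proof (cases "\<phi> (x + t *\<^sub>R (y - x))")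
    case (real r)
    with le have "r - q (x + t *\<^sub>R (y - x)) \<le> (1 - t) * (a - q x) + t * (b - q y)"
      by simp
    with real qid expand show ?thesis
      by simp
  qed (use le in auto)
qed

text \<open>Compare the Fr\'echet estimate at \<open>x + t (y - x)\<close>, with \<open>t \<le> e\<close> so small that it applies,
  with the chord bound; letting \<open>e \<rightarrow> 0\<close> gives the subgradient inequality.\<close>

lemma frechet_subgradient_strongly_convex_approx:
  fixes \<phi> :: "'a::real_inner \<Rightarrow> ereal"
  assumes cvx: "ereal_strongly_convex \<sigma> \<phi>" and "0 \<le> \<sigma>" and v: "v \<in> frechet_subdiff \<phi> x"
    and a: "\<phi> x = ereal a" and b: "\<phi> y = ereal b" and "0 < e"
  defines "h \<equiv> y - x"
  shows "a + inner v h + \<sigma> / 2 * (norm h)\<^sup>2 \<le> b + e * (norm h + \<sigma> / 2 * (norm h)\<^sup>2)"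
proof -
  obtain d where "0 < d" and d: "\<And>w. norm (w - x) < d \<Longrightarrow>
      \<phi> x + ereal (inner v (w - x) - e * norm (w - x)) \<le> \<phi> w"
    using v \<open>0 < e\<close> unfolding frechet_subdiff_def by blast
  define t where "t = min (1 / 2) (min e (d / (2 * (norm h + 1))))"
  have t: "0 < t" "t < 1" "t \<le> e"
    unfolding t_def using \<open>0 < e\<close> \<open>0 < d\<close> by (auto simp: add_nonneg_pos)
  have "t * norm h \<le> d / (2 * (norm h + 1)) * (norm h + 1)"
    unfolding t_def using \<open>0 < d\<close> by (intro mult_mono) (auto simp: add_nonneg_pos)
  also have "\<dots> = d / 2"
    using norm_ge_zero[of h] by (simp add: field_simps add_nonneg_eq_0_iff)
  also have "\<dots> < d" using \<open>0 < d\<close> by simp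
  finally have "norm ((x + t *\<^sub>R h) - x) < d" using t by simp
  then have lower: "ereal (a + t * inner v h - e * (t * norm h)) \<le> \<phi> (x + t *\<^sub>R h)"
    using d[of "x + t *\<^sub>R h"] t a by (simp add: add_diff_eq)
  have upper: "\<phi> (x + t *\<^sub>R h) \<le> ereal ((1 - t) * a + t * b - \<sigma> / 2 * (t * (1 - t)) * (norm h)\<^sup>2)"
    using ereal_strongly_convex_segment[OF cvx a b t(1,2)] unfolding h_def by simp
  from order_trans[OF lower upper]
  have "t * (inner v h - e * norm h) \<le> t * (b - a - \<sigma> / 2 * (1 - t) * (norm h)\<^sup>2)"
    by (simp add: algebra_simps)
  then have "inner v h - e * norm h \<le> b - a - \<sigma> / 2 * (1 - t) * (norm h)\<^sup>2"
    using t by (simp add: mult_le_cancel_left_pos)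
  moreover have "\<sigma> / 2 * (1 - t) * (norm h)\<^sup>2 = \<sigma> / 2 * (norm h)\<^sup>2 - \<sigma> / 2 * t * (norm h)\<^sup>2"
    by (simp add: field_simps)
  moreover have "\<sigma> / 2 * t * (norm h)\<^sup>2 \<le> \<sigma> / 2 * e * (norm h)\<^sup>2"
    using t \<open>0 \<le> \<sigma>\<close> by (intro mult_right_mono mult_left_mono) auto
  moreover have "e * (norm h + \<sigma> / 2 * (norm h)\<^sup>2) = e * norm h + \<sigma> / 2 * e * (norm h)\<^sup>2"
    by (simp add: algebra_simps)
  ultimately show ?thesis
    by linarith
qed

lemma frechet_subgradient_strongly_convex_ineq:
  fixes \<phi> :: "'a::real_inner \<Rightarrow> ereal"
  assumes cvx: "ereal_strongly_convex \<sigma> \<phi>" and "\<And>x. \<phi> x \<noteq> -\<infinity>" and "0 \<le> \<sigma>"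
    and v: "v \<in> frechet_subdiff \<phi> x"
  shows "\<phi> x + ereal (inner v (y - x) + \<sigma> / 2 * (norm (y - x))\<^sup>2) \<le> \<phi> y"
proof (cases "\<phi> y")
  case (real b)
  obtain a where a: "\<phi> x = ereal a"
    using v unfolding frechet_subdiff_def by (cases "\<phi> x") auto
  define K where "K = norm (y - x) + \<sigma> / 2 * (norm (y - x))\<^sup>2 + 1"
  have "0 < K"
    unfolding K_def using \<open>0 \<le> \<sigma>\<close> by (simp add: add_nonneg_pos)
  have "a + inner v (y - x) + \<sigma> / 2 * (norm (y - x))\<^sup>2 \<le> b"
  proof (rule field_le_epsilon)
    fix e :: real assume "0 < e"
    then have "0 < e / K"
      using \<open>0 < K\<close> by simp
    from frechet_subgradient_strongly_convex_approx[OF cvx \<open>0 \<le> \<sigma>\<close> v a real this]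
    have "a + inner v (y - x) + \<sigma> / 2 * (norm (y - x))\<^sup>2 \<le> b + e / K * (K - 1)"
      unfolding K_def by simp
    also have "\<dots> \<le> b + e"
      using \<open>0 < K\<close> \<open>0 < e\<close> by (simp add: field_simps)
    finally show "a + inner v (y - x) + \<sigma> / 2 * (norm (y - x))\<^sup>2 \<le> b + e" .
  qed
  then show ?thesis
    using a real by simp
qed (use assms(2) in simp_all)

lemma limiting_subgradient_strongly_convex_ineq:
  fixes \<phi> :: "'a::real_inner \<Rightarrow> ereal"
  assumes cvx: "ereal_strongly_convex \<sigma> \<phi>" and nm: "\<And>x. \<phi> x \<noteq> -\<infinity>" and "0 \<le> \<sigma>"
    and v: "v \<in> limiting_subdiff \<phi> x"
  shows "\<phi> x \<noteq> \<infinity>" and "\<phi> x + ereal (inner v (y - x) + \<sigma> / 2 * (norm (y - x))\<^sup>2) \<le> \<phi> y"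
proof -
  obtain xs vs where xs: "xs \<longlonglongrightarrow> x" and fxs: "(\<lambda>k. \<phi> (xs k)) \<longlonglongrightarrow> \<phi> x"
    and vs: "\<And>k. vs k \<in> frechet_subdiff \<phi> (xs k)" and "vs \<longlonglongrightarrow> v"
    using v unfolding limiting_subdiff_def by blast
  define r where "r k y = inner (vs k) (y - xs k) + \<sigma> / 2 * (norm (y - xs k))\<^sup>2" for k y
  have r_lim: "(\<lambda>k. r k y) \<longlonglongrightarrow> inner v (y - x) + \<sigma> / 2 * (norm (y - x))\<^sup>2" for y
    unfolding r_def by (intro tendsto_intros xs \<open>vs \<longlonglongrightarrow> v\<close>)
  have bound: "\<phi> x \<le> ereal (b - (inner v (y - x) + \<sigma> / 2 * (norm (y - x))\<^sup>2))"
    if b: "\<phi> y = ereal b" for y b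
  proof (rule LIMSEQ_le[OF fxs])
    show "(\<lambda>k. ereal (b - r k y)) \<longlonglongrightarrow> ereal (b - (inner v (y - x) + \<sigma> / 2 * (norm (y - x))\<^sup>2))"
      by (intro tendsto_intros r_lim)
    have "\<phi> (xs k) \<le> ereal (b - r k y)" for k
    proof -
      have "\<phi> (xs k) + ereal (r k y) \<le> ereal b"
        unfolding r_def b[symmetric]
        by (rule frechet_subgradient_strongly_convex_ineq[OF cvx nm \<open>0 \<le> \<sigma>\<close> vs])
      then show ?thesis by (cases "\<phi> (xs k)") auto
    qed
    then show "\<exists>N. \<forall>k\<ge>N. \<phi> (xs k) \<le> ereal (b - r k y)"
      by blast
  qed
  obtain b0 where "\<phi> (xs 0) = ereal b0"
    using vs[of 0] unfolding frechet_subdiff_def by (cases "\<phi> (xs 0)") auto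
  from bound[OF this] show "\<phi> x \<noteq> \<infinity>" by auto
  show "\<phi> x + ereal (inner v (y - x) + \<sigma> / 2 * (norm (y - x))\<^sup>2) \<le> \<phi> y"
  proof (cases "\<phi> y")
    case (real b)
    with bound[OF real] show ?thesis by (cases "\<phi> x") auto
  qed (use nm in auto)
qed

lemma limiting_subdiff_strongly_monotone:
  fixes \<phi> :: "'a::real_inner \<Rightarrow> ereal"
  assumes cvx: "ereal_strongly_convex \<sigma> \<phi>" and nm: "\<And>x. \<phi> x \<noteq> -\<infinity>" and "0 \<le> \<sigma>"
    and v1: "v1 \<in> limiting_subdiff \<phi> y1" and v2: "v2 \<in> limiting_subdiff \<phi> y2"
  shows "\<sigma> * (norm (y1 - y2))\<^sup>2 \<le> inner (v1 - v2) (y1 - y2)"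
proof -
  note ineq = limiting_subgradient_strongly_convex_ineq[OF cvx nm \<open>0 \<le> \<sigma>\<close>]
  obtain a1 a2 where a1: "\<phi> y1 = ereal a1" and a2: "\<phi> y2 = ereal a2"
    using ineq(1)[OF v1] ineq(1)[OF v2] nm by (metis ereal_cases)
  have "a1 + (inner v1 (y2 - y1) + \<sigma> / 2 * (norm (y2 - y1))\<^sup>2) \<le> a2"
    using ineq(2)[OF v1, of y2] a1 a2 by simp
  moreover have "a2 + (inner v2 (y1 - y2) + \<sigma> / 2 * (norm (y1 - y2))\<^sup>2) \<le> a1"
    using ineq(2)[OF v2, of y1] a1 a2 by simp
  moreover have "inner v1 (y2 - y1) + inner v2 (y1 - y2) = - inner (v1 - v2) (y1 - y2)"
    by (simp add: inner_diff_left inner_diff_right)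
  ultimately show ?thesis
    by (simp add: norm_minus_commute)
qed

lemma limiting_subgradient_value_bound:
  fixes \<phi> :: "'a::real_inner \<Rightarrow> ereal"
  assumes cvx: "ereal_strongly_convex \<sigma> \<phi>" "\<And>x. \<phi> x \<noteq> -\<infinity>" "0 \<le> \<sigma>"
    and v: "v \<in> limiting_subdiff \<phi> x" and c: "\<phi> y = ereal c"
    and "norm v \<le> B" "norm (y - x) \<le> D"
  shows "\<phi> x \<le> ereal (c + B * D)"
proof -
  obtain a where a: "\<phi> x = ereal a"
    using limiting_subgradient_strongly_convex_ineq(1)[OF cvx v] cvx(2)[of x] by (cases "\<phi> x") auto
  have "a + (inner v (y - x) + \<sigma> / 2 * (norm (y - x))\<^sup>2) \<le> c"
    using limiting_subgradient_strongly_convex_ineq(2)[OF cvx v, of y] a c by simp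
  moreover have "- inner v (y - x) \<le> norm v * norm (y - x)"
    using Cauchy_Schwarz_ineq2[of v "y - x"] by linarith
  moreover have "norm v * norm (y - x) \<le> B * D"
    using assms(6,7) order_trans[OF norm_ge_zero assms(6)] by (intro mult_mono) auto
  moreover have "0 \<le> \<sigma> / 2 * (norm (y - x))\<^sup>2"
    using \<open>0 \<le> \<sigma>\<close> by simp
  ultimately show ?thesis
    using a by simp
qed

section \<open>The proximal mapping\<close>

lemma lsc_fun_add_continuous:
  fixes f :: "'a::topological_space \<Rightarrow> ereal"
  assumes lsc: "lsc_fun f" and nm: "\<And>x. f x \<noteq> -\<infinity>" and q: "continuous_on UNIV q"
  shows "lsc_fun (\<lambda>x. f x + ereal (q x))"
  unfolding lsc_fun_def
proof (intro allI impI)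
  fix x c assume c: "c < f x + ereal (q x)"
  show "\<forall>\<^sub>F y in nhds x. c < f y + ereal (q y)"
  proof (cases c)
    case (real r)
    then have "ereal (r - q x) < f x"
      using c by (cases "f x") auto
    then obtain a where "ereal (r - q x) < ereal a" "ereal a < f x"
      using ereal_dense2 by blast
    then have a: "r - q x < a" "ereal a < f x" by auto
    have "\<forall>\<^sub>F y in nhds x. ereal a < f y"
      using lsc a(2) unfolding lsc_fun_def by blast
    moreover have "\<forall>\<^sub>F y in nhds x. r - a < q y"
      using q a(1) by (intro order_tendstoD(1)) (auto simp: continuous_on_def tendsto_nhds_iff)
    ultimately show ?thesis
    proof eventually_elim
      case (elim y)
      then show ?case using real by (cases "f y") auto
    qed
  qed (use c nm in auto)
qed

lemma lsc_fun_closed_sublevel: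
  assumes "lsc_fun F"
  shows "closed {w. F w \<le> c}"
proof -
  have "open {w. c < F w}"
  proof (rule open_subopen[THEN iffD2], rule ballI)
    fix x assume "x \<in> {w. c < F w}"
    then have "\<forall>\<^sub>F y in nhds x. c < F y"
      using assms unfolding lsc_fun_def by blast
    then show "\<exists>T. open T \<and> x \<in> T \<and> T \<subseteq> {w. c < F w}"
      unfolding eventually_nhds by blast
  qed
  moreover have "- {w. F w \<le> c} = {w. c < F w}"
    by (auto simp: not_le)
  ultimately show ?thesis
    unfolding closed_def by simp
qed

lemma lsc_fun_attains_min:
  fixes F :: "'a::topological_space \<Rightarrow> ereal"
  assumes "lsc_fun F" "compact K" and level: "\<And>w. F w \<le> F w0 \<Longrightarrow> w \<in> K"
  obtains m where "\<And>w. F m \<le> F w"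
proof -
  define inf where "inf = (INF w\<in>K. F w)"
  have "K \<inter> (\<Inter>c\<in>{c. inf < c}. {w. F w \<le> c}) \<noteq> {}"
  proof (rule compact_imp_fip_image)
    show "compact K" "closed {w. F w \<le> c}" for c
      using assms(1,2) lsc_fun_closed_sublevel by auto
    fix C assume C: "finite C" "C \<subseteq> {c. inf < c}"
    show "K \<inter> (\<Inter>c\<in>C. {w. F w \<le> c}) \<noteq> {}"
    proof (cases "C = {}")
      case True
      then show ?thesis using level[of w0] by auto
    next
      case False
      then have "inf < Min C"
        using C Min_in by blast
      then obtain w where w: "w \<in> K" "F w < Min C"
        unfolding inf_def INF_less_iff by blast
      have "F w \<le> c" if "c \<in> C" for c
        using w(2) Min_le[OF C(1) that] by simp
      then show ?thesis
        using w(1) by blast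
    qed
  qed
  then obtain m where m: "\<And>c. inf < c \<Longrightarrow> F m \<le> c"
    by blast
  then have "F m \<le> inf"
    by (rule dense_ge)
  moreover have "inf \<le> F w0"
    unfolding inf_def using level[of w0] by (intro INF_lower) auto
  moreover have "inf \<le> F w" if "w \<in> K" for w
    unfolding inf_def using that by (rule INF_lower)
  ultimately show thesis
    using level by (metis nle_le order_trans that)
qed

lemma prox_map_value_bound:
  assumes fxb: "f xb = ereal fb"
    and le: "f y + ereal ((norm (y - z))\<^sup>2 / (2 * lam)) \<le> f xb + ereal ((norm (xb - z))\<^sup>2 / (2 * lam))"
  shows "f y \<le> ereal (fb + (2 * inner (y - xb) (z - xb) - (norm (y - xb))\<^sup>2) / (2 * lam))"
proof -
  have "(norm (y - z))\<^sup>2 = (norm (xb - z))\<^sup>2 - (2 * inner (y - xb) (z - xb) - (norm (y - xb))\<^sup>2)"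
    using norm_diff_square[of "y - xb" "z - xb"] by (simp add: norm_minus_commute)
  then have "(norm (y - z))\<^sup>2 / (2 * lam)
      = (norm (xb - z))\<^sup>2 / (2 * lam) - (2 * inner (y - xb) (z - xb) - (norm (y - xb))\<^sup>2) / (2 * lam)"
    by (simp add: diff_divide_distrib)
  then show ?thesis
    using le fxb by (cases "f y") auto
qed

lemma prox_map_localization:
  fixes f :: "'a::real_inner \<Rightarrow> ereal"
  assumes fxb: "f xb = ereal fb" and vb: "vb \<in> prox_subdiff mu f xb"
    and "0 < lam" "2 * lam \<le> mu"
    and le: "f y + ereal ((norm (y - z))\<^sup>2 / (2 * lam)) \<le> f xb + ereal ((norm (xb - z))\<^sup>2 / (2 * lam))"
  defines "d \<equiv> z - (xb + lam *\<^sub>R vb)"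
  shows "norm (y - xb) \<le> 4 * norm d"
    and "f y \<le> ereal (fb + 4 * norm d * (norm vb + norm d / lam))"
proof -
  define h where "h = y - xb"
  have p: "z - xb = lam *\<^sub>R vb + d"
    unfolding d_def by simp
  have lower: "ereal (fb + inner vb h - (norm h)\<^sup>2 / (2 * mu)) \<le> f y"
    using vb unfolding prox_subdiff_finite_iff[where f = f, OF fxb] h_def by blast
  have upper: "f y \<le> ereal (fb + (2 * inner h (z - xb) - (norm h)\<^sup>2) / (2 * lam))"
    unfolding h_def by (rule prox_map_value_bound[OF fxb le])
  obtain c where c: "f y = ereal c"
    using lower upper by (cases "f y") auto
  have "(2 * inner h (z - xb) - (norm h)\<^sup>2) / (2 * lam)
      = inner vb h + inner h d / lam - (norm h)\<^sup>2 / (2 * lam)"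
    unfolding p using \<open>0 < lam\<close> by (simp add: inner_add_right inner_commute field_simps)
  then have "(norm h)\<^sup>2 / (2 * lam) - (norm h)\<^sup>2 / (2 * mu) \<le> inner h d / lam"
    using lower upper c by simp
  moreover have "(norm h)\<^sup>2 / (2 * mu) \<le> (norm h)\<^sup>2 / (4 * lam)"
    using assms by (intro divide_left_mono) auto
  moreover have "(norm h)\<^sup>2 / (2 * lam) = (norm h)\<^sup>2 / (4 * lam) + (norm h)\<^sup>2 / (4 * lam)"
    by simp
  ultimately have "(norm h)\<^sup>2 / (4 * lam) \<le> inner h d / lam"
    by linarith
  also have "\<dots> \<le> norm h * norm d / lam"
    using norm_cauchy_schwarz[of h d] \<open>0 < lam\<close> by (intro divide_right_mono) auto
  finally have "norm h * norm h \<le> 4 * norm d * norm h"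
    using \<open>0 < lam\<close> by (simp add: field_simps power2_eq_square)
  then have h_bound: "norm h \<le> 4 * norm d"
    by (cases "norm h = 0") auto
  then show "norm (y - xb) \<le> 4 * norm d"
    unfolding h_def .
  have "norm (z - xb) \<le> lam * norm vb + norm d"
    unfolding p using \<open>0 < lam\<close> by (metis abs_of_pos norm_scaleR norm_triangle_ineq)
  then have "inner h (z - xb) \<le> norm h * (lam * norm vb + norm d)"
    using norm_cauchy_schwarz[of h "z - xb"] by (meson mult_left_mono norm_ge_zero order_trans)
  also have "\<dots> \<le> 4 * norm d * (lam * norm vb + norm d)"
    using h_bound \<open>0 < lam\<close> by (intro mult_right_mono) auto
  finally have "inner h (z - xb) / lam \<le> 4 * norm d * (norm vb + norm d / lam)"
    using \<open>0 < lam\<close> by (simp add: field_simps)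
  moreover have "(2 * inner h (z - xb) - (norm h)\<^sup>2) / (2 * lam) \<le> inner h (z - xb) / lam"
    using \<open>0 < lam\<close> by (simp add: field_simps)
  ultimately show "f y \<le> ereal (fb + 4 * norm d * (norm vb + norm d / lam))"
    using upper c by simp
qed

lemma prox_map_nonempty:
  fixes f :: "'a::euclidean_space \<Rightarrow> ereal"
  assumes "lsc_fun f" "proper_fun f" and fxb: "f xb = ereal fb" and vb: "vb \<in> prox_subdiff mu f xb"
    and "0 < lam" "2 * lam \<le> mu"
  shows "prox_map lam f z \<noteq> {}"
proof -
  define F where "F w = f w + ereal ((norm (w - z))\<^sup>2 / (2 * lam))" for w
  have "lsc_fun F"
    unfolding F_def using \<open>proper_fun f\<close> \<open>0 < lam\<close>
    by (intro lsc_fun_add_continuous \<open>lsc_fun f\<close> continuous_intros) (auto simp: proper_fun_def)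
  moreover have "w \<in> cball xb (4 * norm (z - (xb + lam *\<^sub>R vb)))" if "F w \<le> F xb" for w
    using prox_map_localization(1)[OF fxb vb \<open>0 < lam\<close> \<open>2 * lam \<le> mu\<close>, of w z] that
    unfolding F_def by (simp add: dist_norm norm_minus_commute)
  ultimately obtain m where "\<And>w. F m \<le> F w"
    using lsc_fun_attains_min by (metis compact_cball)
  then have "m \<in> prox_map lam f z"
    unfolding prox_map_def F_def by blast
  then show ?thesis by blast
qed

lemma prox_map_at_prox_subgradient:
  fixes f :: "'a::real_inner \<Rightarrow> ereal"
  assumes fxb: "f xb = ereal fb" and vb: "vb \<in> prox_subdiff mu f xb"
    and "0 < lam" "2 * lam \<le> mu"
  shows "prox_map lam f (xb + lam *\<^sub>R vb) = {xb}"
proof -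
  let ?z = "xb + lam *\<^sub>R vb"
  have "xb \<in> prox_map lam f ?z"
    unfolding prox_map_def
  proof (intro CollectI allI)
    fix w
    have "(norm (w - ?z))\<^sup>2 = (norm (w - xb))\<^sup>2 - 2 * lam * inner (w - xb) vb + lam\<^sup>2 * (norm vb)\<^sup>2"
      using norm_diff_scaleR_square[of "w - xb" lam vb] by (simp add: algebra_simps)
    then have "(norm (w - ?z))\<^sup>2 / (2 * lam)
        = (norm (w - xb))\<^sup>2 / (2 * lam) - inner vb (w - xb) + lam * (norm vb)\<^sup>2 / 2"
      using \<open>0 < lam\<close> by (simp add: field_simps inner_commute power2_eq_square)
    moreover have "(norm (w - xb))\<^sup>2 / (2 * mu) \<le> (norm (w - xb))\<^sup>2 / (2 * lam)"
      using assms by (intro divide_left_mono) auto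
    moreover have "ereal (fb + inner vb (w - xb) - (norm (w - xb))\<^sup>2 / (2 * mu)) \<le> f w"
      using vb unfolding prox_subdiff_finite_iff[where f = f, OF fxb] by blast
    moreover have "(norm (xb - ?z))\<^sup>2 / (2 * lam) = lam * (norm vb)\<^sup>2 / 2"
      using \<open>0 < lam\<close> by (simp add: power_mult_distrib power2_eq_square)
    ultimately show "f xb + ereal ((norm (xb - ?z))\<^sup>2 / (2 * lam))
        \<le> f w + ereal ((norm (w - ?z))\<^sup>2 / (2 * lam))"
      using fxb by (cases "f w") auto
  qed
  moreover have "y = xb" if "y \<in> prox_map lam f ?z" for y
  proof -
    have "f y + ereal ((norm (y - ?z))\<^sup>2 / (2 * lam)) \<le> f xb + ereal ((norm (xb - ?z))\<^sup>2 / (2 * lam))"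
      using that unfolding prox_map_def by blast
    then have "norm (y - xb) \<le> 4 * norm (?z - ?z)"
      by (rule prox_map_localization(1)[OF fxb vb \<open>0 < lam\<close> \<open>2 * lam \<le> mu\<close>])
    then show ?thesis by simp
  qed
  ultimately show ?thesis
    by blast
qed

lemma prox_bounded_quadratic_minorant:
  assumes "prox_bounded f"
  obtains lam0 x0 m where "0 < lam0" "ereal lam0 \<le> prox_threshold f"
    "\<And>y. ereal (m - (norm (y - x0))\<^sup>2 / (2 * lam0)) \<le> f y"
proof -
  obtain lam0 x0 where "0 < lam0" and env: "-\<infinity> < moreau_env lam0 f x0"
    using assms unfolding prox_bounded_def by blast
  then have "ereal lam0 \<le> prox_threshold f"
    unfolding prox_threshold_def by (intro Sup_upper) blast
  obtain m where m: "ereal m \<le> moreau_env lam0 f x0"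
    using env by (cases "moreau_env lam0 f x0") auto
  have "ereal (m - (norm (y - x0))\<^sup>2 / (2 * lam0)) \<le> f y" for y
  proof -
    have "ereal m \<le> f y + ereal ((norm (y - x0))\<^sup>2 / (2 * lam0))"
      using m unfolding moreau_env_def by (meson INF_lower UNIV_I order_trans)
    then show ?thesis
      by (cases "f y") auto
  qed
  with \<open>0 < lam0\<close> \<open>ereal lam0 \<le> prox_threshold f\<close> show thesis
    by (rule that)
qed

section \<open>Averaged operators\<close>

text \<open>The quadratic inequality below says exactly that \<open>N = (3 T - Id) / 2\<close> is nonexpansive on
  \<open>U\<close>, i.e.\ that \<open>T = Id / 3 + 2 N / 3\<close> is averaged with constant \<open>2 / 3\<close>.\<close>

definition two_thirds_averaged_on :: "('a::real_inner \<Rightarrow> 'a) \<Rightarrow> 'a set \<Rightarrow> bool" where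
  "two_thirds_averaged_on T U \<longleftrightarrow> (\<forall>x\<in>U. \<forall>y\<in>U.
     3 * (norm (T x - T y))\<^sup>2 \<le> (norm (x - y))\<^sup>2 + 2 * inner (T x - T y) (x - y))"

lemma two_thirds_averaged_on_subset:
  "two_thirds_averaged_on T U \<Longrightarrow> V \<subseteq> U \<Longrightarrow> two_thirds_averaged_on T V"
  unfolding two_thirds_averaged_on_def by blast

lemma two_thirds_averaged_on_nonexpansive:
  assumes "two_thirds_averaged_on T U" "x \<in> U" "y \<in> U"
  shows "norm (T x - T y) \<le> norm (x - y)"
proof (rule ccontr)
  assume contra: "\<not> norm (T x - T y) \<le> norm (x - y)"
  then have "(norm (x - y))\<^sup>2 < (norm (T x - T y))\<^sup>2"
    by (intro power_strict_mono) auto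
  moreover have "norm (T x - T y) * norm (x - y) \<le> (norm (T x - T y))\<^sup>2"
    using contra by (simp add: power2_eq_square mult_left_mono)
  moreover have "inner (T x - T y) (x - y) \<le> norm (T x - T y) * norm (x - y)"
    by (rule norm_cauchy_schwarz)
  ultimately show False
    using assms unfolding two_thirds_averaged_on_def by force
qed

lemma two_thirds_averaged_on_decompose:
  assumes "two_thirds_averaged_on T U"
  defines "N \<equiv> \<lambda>x. (3 / 2) *\<^sub>R T x - (1 / 2) *\<^sub>R x"
  shows "\<And>x y. x \<in> U \<Longrightarrow> y \<in> U \<Longrightarrow> norm (N x - N y) \<le> norm (x - y)"
    and "\<And>x. T x = (1 - 2 / 3) *\<^sub>R x + (2 / 3) *\<^sub>R N x"
proof -
  fix x y assume "x \<in> U" "y \<in> U"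
  define a where "a = T x - T y"
  define c where "c = x - y"
  have "N x - N y = (3 / 2) *\<^sub>R a - (1 / 2) *\<^sub>R c"
    unfolding N_def a_def c_def by (simp add: algebra_simps)
  then have "(norm (N x - N y))\<^sup>2 = (9 / 4) * (norm a)\<^sup>2 - (3 / 2) * inner a c + (1 / 4) * (norm c)\<^sup>2"
    using norm_add_square[of "(3 / 2) *\<^sub>R a" "- (1 / 2) *\<^sub>R c"]
    by (simp add: power_mult_distrib power2_eq_square)
  also have "\<dots> \<le> (norm c)\<^sup>2"
    using assms \<open>x \<in> U\<close> \<open>y \<in> U\<close> unfolding two_thirds_averaged_on_def a_def c_def by fastforce
  finally show "norm (N x - N y) \<le> norm (x - y)"
    unfolding c_def by (rule power2_le_imp_le) simp
next
  show "T x = (1 - 2 / 3) *\<^sub>R x + (2 / 3) *\<^sub>R N x" for x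
    unfolding N_def by (simp add: algebra_simps)
qed

lemma two_thirds_averaged_on_fejer:
  assumes "two_thirds_averaged_on T U" "x \<in> U" "p \<in> U" "T p = p"
  shows "(norm (T x - p))\<^sup>2 \<le> (norm (x - p))\<^sup>2 - (norm (x - T x))\<^sup>2 / 2"
proof -
  have "3 * (norm (T x - p))\<^sup>2 \<le> (norm (x - p))\<^sup>2 + 2 * inner (T x - p) (x - p)"
    using assms unfolding two_thirds_averaged_on_def by force
  moreover have "(norm (x - T x))\<^sup>2 = (norm (x - p))\<^sup>2 - 2 * inner (T x - p) (x - p) + (norm (T x - p))\<^sup>2"
    using norm_diff_square[of "x - p" "T x - p"] by (simp add: inner_commute)
  ultimately show ?thesis
    by linarith
qed

text \<open>Composing a firmly nonexpansive map with a forward step of length at most the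
  cocoercivity constant gives a \<open>2/3\<close>-averaged map.\<close>

lemma firm_forward_two_thirds_ineq:
  fixes u t g :: "'a::real_inner"
  assumes firm: "(norm t)\<^sup>2 \<le> inner (u - lam *\<^sub>R g) t"
    and coc: "\<beta> * (norm g)\<^sup>2 \<le> inner g u" and "0 < lam" "lam \<le> \<beta>"
  shows "3 * (norm t)\<^sup>2 \<le> (norm u)\<^sup>2 + 2 * inner t u"
proof -
  have "0 \<le> (norm (u - t - (2 * lam) *\<^sub>R g))\<^sup>2"
    by simp
  also have "\<dots> = (norm u)\<^sup>2 - 2 * inner t u + (norm t)\<^sup>2
      - 4 * lam * inner g u + 4 * lam * inner g t + 4 * lam\<^sup>2 * (norm g)\<^sup>2"
    unfolding norm_diff_scaleR_square
    using norm_add_square[of u "- t"]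
    by (simp add: inner_commute inner_diff_right power_mult_distrib algebra_simps)
  finally have "0 \<le> (norm u)\<^sup>2 - 2 * inner t u + (norm t)\<^sup>2
      - 4 * lam * inner g u + 4 * lam * inner g t + 4 * lam\<^sup>2 * (norm g)\<^sup>2" .
  moreover have "lam\<^sup>2 * (norm g)\<^sup>2 \<le> lam * inner g u"
  proof -
    have "lam\<^sup>2 * (norm g)\<^sup>2 \<le> lam * (\<beta> * (norm g)\<^sup>2)"
      using assms by (simp add: power2_eq_square mult.assoc mult_left_mono mult_right_mono)
    also have "\<dots> \<le> lam * inner g u"
      using coc \<open>0 < lam\<close> by simp
    finally show ?thesis .
  qed
  moreover have "inner (u - lam *\<^sub>R g) t = inner u t - lam * inner g t"
    by (simp add: inner_diff_left)
  then have "(norm t)\<^sup>2 \<le> inner u t - lam * inner g t"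
    using firm by simp
  ultimately show ?thesis
    by (simp add: inner_commute)
qed

lemma decseq_norm_subseq_limit:
  assumes dec: "decseq (\<lambda>k. norm (xs k - l))" and "strict_mono \<sigma>" and lim: "(xs \<circ> \<sigma>) \<longlonglongrightarrow> l"
  shows "xs \<longlonglongrightarrow> l"
  unfolding lim_sequentially
proof (intro allI impI)
  fix e :: real assume "0 < e"
  then obtain K where "dist (xs (\<sigma> K)) l < e"
    using lim unfolding lim_sequentially by auto
  then have "dist (xs n) l < e" if "\<sigma> K \<le> n" for n
    using decseqD[OF dec that] by (simp add: dist_norm)
  then show "\<exists>N. \<forall>n\<ge>N. dist (xs n) l < e"
    by blast
qed

lemma two_thirds_averaged_on_ball_maps:
  assumes "two_thirds_averaged_on T (ball c r)" "T c = c" "x \<in> ball c r"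
  shows "T x \<in> ball c r"
proof -
  have "c \<in> ball c r"
    using assms(3) by (simp add: le_less_trans[OF zero_le_dist])
  then have "norm (T x - c) \<le> norm (x - c)"
    using two_thirds_averaged_on_nonexpansive[OF assms(1,3) \<open>c \<in> ball c r\<close>] assms(2) by simp
  then show ?thesis
    using assms(3) by (simp add: dist_norm norm_minus_commute)
qed

locale two_thirds_averaged_iteration =
  fixes T :: "'a::euclidean_space \<Rightarrow> 'a" and c :: 'a and r :: real and xs :: "nat \<Rightarrow> 'a"
  assumes averaged: "two_thirds_averaged_on T (ball c r)" and fixed: "T c = c"
    and start: "xs 0 \<in> ball c r" and iterate: "\<And>k. xs (Suc k) = T (xs k)"
begin

lemma center_in_ball: "c \<in> ball c r"
  using start by (simp add: le_less_trans[OF zero_le_dist])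

lemma in_ball: "xs k \<in> ball c r"
  by (induction k) (use start iterate two_thirds_averaged_on_ball_maps[OF averaged fixed] in auto)

lemma fejer:
  assumes "p \<in> ball c r" "T p = p"
  shows "(norm (xs (Suc k) - p))\<^sup>2 \<le> (norm (xs k - p))\<^sup>2 - (norm (xs k - xs (Suc k)))\<^sup>2 / 2"
  using two_thirds_averaged_on_fejer[OF averaged in_ball assms] iterate by simp

lemma decseq_dist_fixed_point:
  assumes "p \<in> ball c r" "T p = p"
  shows "decseq (\<lambda>k. norm (xs k - p))"
proof (rule decseq_SucI)
  fix k
  have "(norm (xs (Suc k) - p))\<^sup>2 \<le> (norm (xs k - p))\<^sup>2"
    using fejer[OF assms, of k] zero_le_power2[of "norm (xs k - xs (Suc k))"] by linarith
  then show "norm (xs (Suc k) - p) \<le> norm (xs k - p)"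
    by (rule power2_le_imp_le) simp
qed

lemma asymptotically_regular: "(\<lambda>k. xs k - xs (Suc k)) \<longlonglongrightarrow> 0"
proof -
  define D where "D k = (norm (xs k - xs (Suc k)))\<^sup>2" for k
  have "(\<Sum>k<n. D k) \<le> 2 * ((norm (xs 0 - c))\<^sup>2 - (norm (xs n - c))\<^sup>2)" for n
  proof (induction n)
    case (Suc n)
    then show ?case
      using fejer[OF center_in_ball fixed, of n] unfolding D_def by simp
  qed simp
  then have "(\<Sum>k<n. D k) \<le> 2 * (norm (xs 0 - c))\<^sup>2" for n
    using zero_le_power2[of "norm (xs n - c)"] by (smt (verit))
  then have "summable D"
    by (intro summableI_nonneg_bounded[where x = "2 * (norm (xs 0 - c))\<^sup>2"]) (auto simp: D_def)
  then have "(\<lambda>k. sqrt (D k)) \<longlonglongrightarrow> sqrt 0"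
    by (intro tendsto_intros summable_LIMSEQ_zero)
  then show ?thesis
    unfolding D_def by (simp add: tendsto_norm_zero_iff)
qed

lemma converges_to_fixed_point: "\<exists>l\<in>ball c r. xs \<longlonglongrightarrow> l \<and> T l = l"
proof -
  define R where "R = norm (xs 0 - c)"
  have bounded: "\<forall>k. xs k \<in> cball c R"
    using decseqD[OF decseq_dist_fixed_point[OF center_in_ball fixed], of 0]
    unfolding R_def by (simp add: dist_norm norm_minus_commute)
  obtain l \<sigma> where "l \<in> cball c R" "strict_mono \<sigma>" and lim: "(xs \<circ> \<sigma>) \<longlonglongrightarrow> l"
    by (rule seq_compactE[OF compact_imp_seq_compact[OF compact_cball] bounded])
  moreover have "cball c R \<subseteq> ball c r"
    using start unfolding R_def by (auto simp: dist_norm norm_minus_commute)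
  ultimately have "l \<in> ball c r" by blast
  have "(\<lambda>k. xs (Suc (\<sigma> k))) \<longlonglongrightarrow> T l"
  proof (rule Lim_null_comparison[THEN LIM_zero_cancel])
    show "\<forall>\<^sub>F k in sequentially. norm (xs (Suc (\<sigma> k)) - T l) \<le> norm (xs (\<sigma> k) - l)"
      using two_thirds_averaged_on_nonexpansive[OF averaged in_ball \<open>l \<in> ball c r\<close>] iterate by simp
    show "(\<lambda>k. norm (xs (\<sigma> k) - l)) \<longlonglongrightarrow> 0"
      using lim by (simp add: o_def tendsto_norm_zero_iff LIM_zero)
  qed
  moreover have "(\<lambda>k. xs (Suc (\<sigma> k))) \<longlonglongrightarrow> l"
  proof -
    have "(\<lambda>k. xs (\<sigma> k) - (xs (\<sigma> k) - xs (Suc (\<sigma> k)))) \<longlonglongrightarrow> l - 0"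
      using lim LIMSEQ_subseq_LIMSEQ[OF asymptotically_regular \<open>strict_mono \<sigma>\<close>]
      by (intro tendsto_diff) (auto simp: o_def)
    then show ?thesis by simp
  qed
  ultimately have "T l = l"
    by (rule LIMSEQ_unique)
  then show ?thesis
    using decseq_norm_subseq_limit[OF decseq_dist_fixed_point \<open>strict_mono \<sigma>\<close> lim]
      \<open>l \<in> ball c r\<close> by blast
qed

end

lemma contraction_iteration_linear:
  fixes T :: "'a::real_normed_vector \<Rightarrow> 'a"
  assumes contr: "\<And>x. x \<in> ball c r \<Longrightarrow> norm (T x - c) \<le> q * norm (x - c)"
    and "0 \<le> q" "q < 1" and "xs 0 \<in> ball c r" and iterate: "\<And>k. xs (Suc k) = T (xs k)"
  shows "\<And>k. norm (xs (Suc k) - c) \<le> q * norm (xs k - c)" and "xs \<longlonglongrightarrow> c"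
proof -
  have in_ball: "xs k \<in> ball c r" for k
  proof (induction k)
    case (Suc k)
    have "norm (T (xs k) - c) \<le> q * norm (xs k - c)"
      by (rule contr[OF Suc])
    also have "\<dots> \<le> norm (xs k - c)"
      using \<open>0 \<le> q\<close> \<open>q < 1\<close> by (intro mult_left_le_one_le) auto
    finally show ?case
      using Suc iterate by (simp add: dist_norm norm_minus_commute)
  qed (fact \<open>xs 0 \<in> ball c r\<close>)
  show step: "norm (xs (Suc k) - c) \<le> q * norm (xs k - c)" for k
    using contr[OF in_ball] iterate by simp
  have bound: "norm (xs k - c) \<le> q ^ k * norm (xs 0 - c)" for k
  proof (induction k)
    case (Suc k)
    have "norm (xs (Suc k) - c) \<le> q * norm (xs k - c)"
      by (rule step)
    also have "\<dots> \<le> q * (q ^ k * norm (xs 0 - c))"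
      using Suc \<open>0 \<le> q\<close> by (rule mult_left_mono)
    finally show ?case
      by (simp only: power_Suc mult.assoc)
  qed simp
  have lim: "(\<lambda>k. q ^ k * norm (xs 0 - c)) \<longlonglongrightarrow> 0"
    using \<open>0 \<le> q\<close> \<open>q < 1\<close> by (intro tendsto_mult_left_zero LIMSEQ_power_zero) auto
  have "(\<lambda>k. xs k - c) \<longlonglongrightarrow> 0"
    using bound by (intro Lim_null_comparison[OF always_eventually lim]) auto
  then show "xs \<longlonglongrightarrow> c"
    by (simp add: LIM_zero_iff)
qed

section \<open>Local convex models from variational convexity\<close>

text \<open>The data provided by variational (strong) convexity of \<open>f\<close> at \<open>xb\<close> for \<open>vb\<close>, with the
  neighbourhoods \<open>U\<close> and \<open>V\<close> shrunk to balls; of the graph identity only the inclusion of the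
  localized graph of \<open>\<partial>f\<close> into that of \<open>\<partial>\<phi>\<close> is kept.\<close>

locale local_convex_model =
  fixes f \<phi> :: "'a::real_inner \<Rightarrow> ereal" and xb vb :: 'a and \<sigma> \<rho> \<eta> \<epsilon> :: real
  assumes radii_pos: "0 < \<rho>" "0 < \<eta>" "0 < \<epsilon>"
    and modulus_nonneg: "0 \<le> \<sigma>"
    and model_strongly_convex: "ereal_strongly_convex \<sigma> \<phi>"
    and model_not_minf: "\<And>x. \<phi> x \<noteq> -\<infinity>"
    and model_below: "\<And>x. x \<in> ball xb \<rho> \<Longrightarrow> \<phi> x \<le> f x"
    and model_at_xb: "\<phi> xb = f xb"
    and subgradient_at_xb: "vb \<in> limiting_subdiff \<phi> xb"
    and model_subdiff: "\<And>x v. x \<in> ball xb \<rho> \<Longrightarrow> f x < f xb + ereal \<epsilon> \<Longrightarrow> v \<in> ball vb \<eta> \<Longrightarrow>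
      v \<in> limiting_subdiff f x \<Longrightarrow> v \<in> limiting_subdiff \<phi> x \<and> f x = \<phi> x"

text \<open>If \<open>f\<close> were \<open>\<infinity>\<close> at \<open>xb\<close>, the approximating points of the limiting subgradient would eventually
  lie in the localization, where \<open>f = \<phi>\<close> stays bounded above by convexity of \<open>\<phi>\<close>.\<close>

lemma var_convex_with_value_finite:
  fixes f :: "'a::real_inner \<Rightarrow> ereal"
  assumes vb: "vb \<in> limiting_subdiff f xb"
    and cvx: "ereal_strongly_convex \<sigma> \<phi>" "\<And>x. \<phi> x \<noteq> -\<infinity>" "0 \<le> \<sigma>" and "0 < \<rho>" "0 < \<eta>"
    and sub: "\<And>x v. x \<in> ball xb \<rho> \<Longrightarrow> f x < f xb + ereal \<epsilon> \<Longrightarrow> v \<in> ball vb \<eta> \<Longrightarrow>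
      v \<in> limiting_subdiff f x \<Longrightarrow> v \<in> limiting_subdiff \<phi> x \<and> f x = \<phi> x"
  shows "f xb \<noteq> \<infinity>"
proof
  assume inf: "f xb = \<infinity>"
  obtain xs vs where xs: "xs \<longlonglongrightarrow> xb" and fxs: "(\<lambda>k. f (xs k)) \<longlonglongrightarrow> f xb"
    and vs: "\<And>k. vs k \<in> frechet_subdiff f (xs k)" and "vs \<longlonglongrightarrow> vb"
    using vb unfolding limiting_subdiff_def by blast
  have finite: "\<bar>f (xs k)\<bar> \<noteq> \<infinity>" for k
    using vs[of k] unfolding frechet_subdiff_def by simp
  have "\<forall>\<^sub>F k in sequentially. xs k \<in> ball xb \<rho> \<and> vs k \<in> ball vb \<eta>"
    using tendstoD[OF xs \<open>0 < \<rho>\<close>] tendstoD[OF \<open>vs \<longlonglongrightarrow> vb\<close> \<open>0 < \<eta>\<close>]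
    by eventually_elim (simp add: dist_commute)
  then obtain N where near: "\<And>k. N \<le> k \<Longrightarrow> xs k \<in> ball xb \<rho> \<and> vs k \<in> ball vb \<eta>"
    unfolding eventually_sequentially by blast
  have model: "vs k \<in> limiting_subdiff \<phi> (xs k) \<and> f (xs k) = \<phi> (xs k)" if "N \<le> k" for k
  proof -
    have "f (xs k) < f xb + ereal \<epsilon>"
      using finite[of k] inf by auto
    then show ?thesis
      using sub near[OF that] frechet_subdiff_imp_limiting_subdiff[OF vs[of k]] by blast
  qed
  obtain c where c: "f (xs N) = ereal c"
    using finite[of N] by (cases "f (xs N)") auto
  have "f (xs k) \<le> ereal (c + (norm vb + \<eta>) * (2 * \<rho>))" if "N \<le> k" for k
  proof -
    have "norm (vs k) \<le> norm vb + \<eta>"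
      using near[OF that] norm_triangle_sub[of "vs k" vb] by (simp add: dist_norm norm_minus_commute)
    moreover have "norm (xs N - xs k) \<le> 2 * \<rho>"
      using near[OF that] near[of N] dist_triangle[of "xs N" "xs k" xb]
      by (simp add: dist_norm norm_minus_commute)
    moreover have "\<phi> (xs N) = ereal c"
      using model[OF order_refl] c by simp
    ultimately show ?thesis
      using limiting_subgradient_value_bound[OF cvx conjunct1[OF model[OF that]]] model[OF that]
      by simp
  qed
  then have "f xb \<le> ereal (c + (norm vb + \<eta>) * (2 * \<rho>))"
    by (intro LIMSEQ_le_const2[OF fxs]) auto
  then show False
    using inf by simp
qed

lemma var_convex_with_imp_model:
  fixes f :: "'a::real_inner \<Rightarrow> ereal"
  assumes vc: "var_convex_with Q f xb vb" and "proper_fun f"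
    and Q: "\<And>\<phi>. Q \<phi> \<Longrightarrow> \<exists>\<sigma>. P \<sigma> \<and> 0 \<le> \<sigma> \<and> ereal_strongly_convex \<sigma> \<phi>"
  shows "\<exists>\<phi> \<sigma> \<rho> \<eta> \<epsilon>. P \<sigma> \<and> local_convex_model f \<phi> xb vb \<sigma> \<rho> \<eta> \<epsilon>"
proof -
  obtain U V \<phi> \<epsilon> where vb: "vb \<in> limiting_subdiff f xb"
    and U: "xb \<in> interior U" and V: "vb \<in> interior V"
    and "\<forall>x. \<phi> x \<noteq> -\<infinity>" "Q \<phi>" "\<forall>x\<in>U. \<phi> x \<le> f x" "0 < \<epsilon>"
    and graph: "\<forall>x v. (x \<in> U \<and> f x < f xb + ereal \<epsilon> \<and> v \<in> V \<and> v \<in> limiting_subdiff f x)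
        \<longleftrightarrow> (x \<in> U \<and> v \<in> V \<and> v \<in> limiting_subdiff \<phi> x)"
    and equal: "\<forall>x v. x \<in> U \<and> v \<in> V \<and> v \<in> limiting_subdiff \<phi> x \<longrightarrow> f x = \<phi> x"
    using vc unfolding var_convex_with_def by blast
  obtain \<sigma> where "P \<sigma>" "0 \<le> \<sigma>" "ereal_strongly_convex \<sigma> \<phi>"
    using Q[OF \<open>Q \<phi>\<close>] by blast
  obtain \<rho> where "0 < \<rho>" "ball xb \<rho> \<subseteq> U"
    using U by (meson mem_interior)
  obtain \<eta> where "0 < \<eta>" "ball vb \<eta> \<subseteq> V"
    using V by (meson mem_interior)
  have sub: "v \<in> limiting_subdiff \<phi> x \<and> f x = \<phi> x"
    if "x \<in> ball xb \<rho>" "f x < f xb + ereal \<epsilon>" "v \<in> ball vb \<eta>" "v \<in> limiting_subdiff f x" for x v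
    using graph equal that \<open>ball xb \<rho> \<subseteq> U\<close> \<open>ball vb \<eta> \<subseteq> V\<close> by blast
  have "f xb \<noteq> \<infinity>"
    using var_convex_with_value_finite[OF vb \<open>ereal_strongly_convex \<sigma> \<phi>\<close> _ \<open>0 \<le> \<sigma>\<close>
        \<open>0 < \<rho>\<close> \<open>0 < \<eta>\<close> sub] \<open>\<forall>x. \<phi> x \<noteq> -\<infinity>\<close> by blast
  moreover have "f xb \<noteq> -\<infinity>"
    using \<open>proper_fun f\<close> unfolding proper_fun_def by blast
  ultimately have "f xb < f xb + ereal \<epsilon>"
    using \<open>0 < \<epsilon>\<close> by (cases "f xb") auto
  then have at_xb: "vb \<in> limiting_subdiff \<phi> xb \<and> f xb = \<phi> xb"
    using sub[of xb vb] vb \<open>0 < \<rho>\<close> \<open>0 < \<eta>\<close> by simp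
  have "local_convex_model f \<phi> xb vb \<sigma> \<rho> \<eta> \<epsilon>"
  proof
    show "0 < \<rho>" "0 < \<eta>" "0 < \<epsilon>" "0 \<le> \<sigma>" "ereal_strongly_convex \<sigma> \<phi>"
      by fact+
    show "\<phi> x \<noteq> -\<infinity>" for x
      using \<open>\<forall>x. \<phi> x \<noteq> -\<infinity>\<close> by blast
    show "\<phi> x \<le> f x" if "x \<in> ball xb \<rho>" for x
      using that \<open>ball xb \<rho> \<subseteq> U\<close> \<open>\<forall>x\<in>U. \<phi> x \<le> f x\<close> by blast
    show "\<phi> xb = f xb" "vb \<in> limiting_subdiff \<phi> xb"
      using at_xb by auto
  qed (fact sub)
  then show ?thesis
    using \<open>P \<sigma>\<close> by blast
qed

lemma var_convex_imp_model:
  assumes "var_convex f xb vb" "proper_fun f"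
  shows "\<exists>\<phi> \<rho> \<eta> \<epsilon>. local_convex_model f \<phi> xb vb 0 \<rho> \<eta> \<epsilon>"
proof -
  have "\<exists>\<sigma>. \<sigma> = 0 \<and> 0 \<le> \<sigma> \<and> ereal_strongly_convex \<sigma> \<phi>" if "ereal_convex \<phi>" for \<phi> :: "'a \<Rightarrow> ereal"
    using that unfolding ereal_strongly_convex_def by simp
  from var_convex_with_imp_model[OF assms(1)[unfolded var_convex_def] assms(2) this]
  show ?thesis
    by simp
qed

lemma var_strongly_convex_imp_model:
  assumes "var_strongly_convex f xb vb" "proper_fun f"
  shows "\<exists>\<phi> \<sigma> \<rho> \<eta> \<epsilon>. 0 < \<sigma> \<and> local_convex_model f \<phi> xb vb \<sigma> \<rho> \<eta> \<epsilon>"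
proof -
  have "\<exists>\<sigma>. 0 < \<sigma> \<and> 0 \<le> \<sigma> \<and> ereal_strongly_convex \<sigma> \<phi>" if "\<exists>\<sigma>>0. ereal_strongly_convex \<sigma> \<phi>"
    for \<phi> :: "'a \<Rightarrow> ereal"
    using that by auto
  from var_convex_with_imp_model[OF assms(1)[unfolded var_strongly_convex_def] assms(2) this]
  show ?thesis .
qed

context local_convex_model
begin

lemma model_finite_at_xb: "f xb \<noteq> \<infinity>" "f xb \<noteq> -\<infinity>"
  using limiting_subgradient_strongly_convex_ineq(1)[OF model_strongly_convex model_not_minf
      modulus_nonneg subgradient_at_xb] model_at_xb model_not_minf[of xb] by auto

lemma model_subgradient_ineq: "f xb + ereal (inner vb (x - xb)) \<le> \<phi> x"
proof -
  have "f xb + ereal (inner vb (x - xb)) \<le> \<phi> xb + ereal (inner vb (x - xb) + \<sigma> / 2 * (norm (x - xb))\<^sup>2)"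
    using model_at_xb model_finite_at_xb modulus_nonneg by (cases "f xb") auto
  also have "\<dots> \<le> \<phi> x"
    by (rule limiting_subgradient_strongly_convex_ineq(2)[OF model_strongly_convex model_not_minf
          modulus_nonneg subgradient_at_xb])
  finally show ?thesis .
qed

lemma local_minimizer:
  assumes g: "\<And>x. g xb - inner vb (x - xb) \<le> g x"
  shows "\<exists>\<delta>>0. \<forall>x. norm (x - xb) < \<delta> \<longrightarrow> f xb + ereal (g xb) \<le> f x + ereal (g x)"
proof (intro exI[of _ "min \<rho> (\<epsilon> / (norm vb + 1))"] conjI allI impI)
  show "0 < min \<rho> (\<epsilon> / (norm vb + 1))"
    using radii_pos by (simp add: add_nonneg_pos)
  fix x assume x: "norm (x - xb) < min \<rho> (\<epsilon> / (norm vb + 1))"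
  obtain fb where fb: "f xb = ereal fb"
    using model_finite_at_xb by (cases "f xb") auto
  have "inner vb (x - xb) \<le> (norm vb + 1) * (\<epsilon> / (norm vb + 1))"
    using norm_cauchy_schwarz[of vb "x - xb"] x by (smt (verit) mult_mono norm_ge_zero)
  moreover have "0 < norm vb + 1"
    by (simp add: add_nonneg_pos)
  ultimately have "inner vb (x - xb) \<le> \<epsilon>"
    by simp
  show "f xb + ereal (g xb) \<le> f x + ereal (g x)"
  proof (cases "f x < f xb + ereal \<epsilon>")
    case True
    have "x \<in> ball xb \<rho>"
      using x by (simp add: dist_norm norm_minus_commute)
    then have "ereal (fb + inner vb (x - xb)) \<le> f x"
      using model_subgradient_ineq[of x] model_below[of x] fb by simp
    then show ?thesis
      using g[of x] fb by (cases "f x") auto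
  next
    case False
    then show ?thesis
      using g[of x] fb \<open>inner vb (x - xb) \<le> \<epsilon>\<close> by (cases "f x") auto
  qed
qed

text \<open>Variational convexity gives the subgradient inequality near \<open>xb\<close>, prox-boundedness a
  global quadratic minorant far away; together they make \<open>vb\<close> a global proximal subgradient.\<close>

lemma prox_subgradient_at_xbI:
  assumes fb: "f xb = ereal fb" and "0 < lam0"
    and minorant: "\<And>y. ereal (m - (norm (y - x0))\<^sup>2 / (2 * lam0)) \<le> f y"
    and "0 < mu" "mu * (norm vb)\<^sup>2 \<le> \<epsilon>"
    and mu: "(\<bar>fb - m\<bar> + (norm (xb - x0))\<^sup>2 / lam0) / \<rho>\<^sup>2 + norm vb / \<rho> + 1 / lam0 \<le> 1 / (2 * mu)"
  shows "vb \<in> prox_subdiff mu f xb"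
  unfolding prox_subdiff_finite_iff[where f = f, OF fb]
proof
  fix y
  let ?q = "fb + inner vb (y - xb) - (norm (y - xb))\<^sup>2 / (2 * mu)"
  show "ereal ?q \<le> f y"
  proof (cases "y \<in> ball xb \<rho> \<and> f y < f xb + ereal \<epsilon>")
    case True
    then have "ereal (fb + inner vb (y - xb)) \<le> f y"
      using model_subgradient_ineq[of y] model_below[of y] fb by simp
    moreover have "ereal ?q \<le> ereal (fb + inner vb (y - xb))"
      using \<open>0 < mu\<close> by simp
    ultimately show ?thesis
      by (rule order_trans[rotated])
  next
    case False
    show ?thesis
    proof (cases "y \<in> ball xb \<rho>")
      case True
      have "?q \<le> fb + \<epsilon>"
        using inner_le_quadratic[OF \<open>0 < mu\<close>, of vb "y - xb"] \<open>mu * (norm vb)\<^sup>2 \<le> \<epsilon>\<close> radii_pos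
        by linarith
      then show ?thesis
        using False True fb by (cases "f y") auto
    next
      case False
      then have "\<rho> \<le> norm (y - xb)"
        by (simp add: dist_norm norm_minus_commute)
      from quadratic_minorant_far[OF \<open>0 < lam0\<close> radii_pos(1) this \<open>0 < mu\<close> mu]
      have "ereal ?q \<le> ereal (m - (norm (y - x0))\<^sup>2 / (2 * lam0))"
        by simp
      then show ?thesis
        using minorant[of y] by (rule order_trans)
    qed
  qed
qed

lemma prox_subgradient_at_xb:
  assumes "prox_bounded f"
  obtains mu where "0 < mu" "ereal mu \<le> prox_threshold f" "vb \<in> prox_subdiff mu f xb"
proof -
  obtain fb where fb: "f xb = ereal fb"
    using model_finite_at_xb by (cases "f xb") auto
  obtain lam0 x0 m where "0 < lam0" "ereal lam0 \<le> prox_threshold f"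
    and minorant: "\<And>y. ereal (m - (norm (y - x0))\<^sup>2 / (2 * lam0)) \<le> f y"
    by (rule prox_bounded_quadratic_minorant[OF assms]) blast
  define S where "S = (\<bar>fb - m\<bar> + (norm (xb - x0))\<^sup>2 / lam0) / \<rho>\<^sup>2 + norm vb / \<rho> + 1 / lam0"
  define mu where "mu = min (\<epsilon> / ((norm vb)\<^sup>2 + 1)) (1 / (2 * S))"
  have "0 \<le> (\<bar>fb - m\<bar> + (norm (xb - x0))\<^sup>2 / lam0) / \<rho>\<^sup>2 + norm vb / \<rho>"
    using \<open>0 < lam0\<close> radii_pos by simp
  then have "1 / lam0 \<le> S" "0 < S"
    unfolding S_def using \<open>0 < lam0\<close> by (simp_all add: add_nonneg_pos)
  have "0 < mu"
    unfolding mu_def using radii_pos \<open>0 < S\<close> by (simp add: add_nonneg_pos)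
  have "mu \<le> 1 / (2 * S)"
    unfolding mu_def by simp
  moreover have "1 / (2 * S) \<le> lam0"
    using \<open>1 / lam0 \<le> S\<close> \<open>0 < lam0\<close> \<open>0 < S\<close> by (simp add: field_simps)
  ultimately have "S \<le> 1 / (2 * mu)" "mu \<le> lam0"
    using \<open>0 < mu\<close> \<open>0 < S\<close> by (simp add: field_simps, linarith)
  have "mu * ((norm vb)\<^sup>2 + 1) \<le> \<epsilon>"
    using pos_le_divide_eq[of "(norm vb)\<^sup>2 + 1" mu \<epsilon>] unfolding mu_def by (simp add: add_nonneg_pos)
  then have "mu * (norm vb)\<^sup>2 \<le> \<epsilon>"
    using \<open>0 < mu\<close> by (simp add: distrib_left)
  have "ereal mu \<le> prox_threshold f"
    using \<open>mu \<le> lam0\<close> \<open>ereal lam0 \<le> prox_threshold f\<close> by (simp add: order_trans[rotated])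
  with \<open>0 < mu\<close> show thesis
    using prox_subgradient_at_xbI[OF fb \<open>0 < lam0\<close> minorant \<open>0 < mu\<close> \<open>mu * (norm vb)\<^sup>2 \<le> \<epsilon>\<close>]
      \<open>S \<le> 1 / (2 * mu)\<close> that unfolding S_def by blast
qed

lemma prox_map_near_xb:
  assumes "proper_fun f" and vb: "vb \<in> prox_subdiff mu f xb" and "0 < lam" "2 * lam \<le> mu"
  obtains \<delta> where "0 < \<delta>"
    "\<And>z y. norm (z - (xb + lam *\<^sub>R vb)) < \<delta> \<Longrightarrow> y \<in> prox_map lam f z \<Longrightarrow>
      (1 / lam) *\<^sub>R (z - y) \<in> limiting_subdiff \<phi> y \<and> f y = \<phi> y"
proof
  obtain fb where fb: "f xb = ereal fb"
    using model_finite_at_xb by (cases "f xb") auto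
  define \<delta> where "\<delta> = min 1 (min (\<rho> / 4) (min (lam * \<eta> / 5) (\<epsilon> / (4 * (norm vb + 1 / lam)))))"
  have "0 < norm vb + 1 / lam"
    using \<open>0 < lam\<close> by (simp add: add_nonneg_pos)
  then show "0 < \<delta>"
    unfolding \<delta>_def using radii_pos \<open>0 < lam\<close> by simp
  fix z y
  assume z: "norm (z - (xb + lam *\<^sub>R vb)) < \<delta>" and y: "y \<in> prox_map lam f z"
  define d where "d = z - (xb + lam *\<^sub>R vb)"
  have "norm d < 1" "4 * norm d < \<rho>" "5 * norm d < lam * \<eta>"
    "4 * norm d * (norm vb + 1 / lam) < \<epsilon>"
    using z \<open>0 < norm vb + 1 / lam\<close> unfolding d_def \<delta>_def by (auto simp: field_simps)
  have "f y + ereal ((norm (y - z))\<^sup>2 / (2 * lam)) \<le> f xb + ereal ((norm (xb - z))\<^sup>2 / (2 * lam))"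
    using y unfolding prox_map_def by blast
  note localization = prox_map_localization[OF fb vb \<open>0 < lam\<close> \<open>2 * lam \<le> mu\<close> this,
      folded d_def]
  have "y \<in> ball xb \<rho>"
    using localization(1) \<open>4 * norm d < \<rho>\<close> by (simp add: dist_norm norm_minus_commute)
  have "4 * norm d * (norm vb + norm d / lam) \<le> 4 * norm d * (norm vb + 1 / lam)"
    using \<open>norm d < 1\<close> \<open>0 < lam\<close> by (intro mult_left_mono add_left_mono divide_right_mono) auto
  then have "f y < f xb + ereal \<epsilon>"
    using localization(2) \<open>4 * norm d * (norm vb + 1 / lam) < \<epsilon>\<close> fb by (simp add: le_less_trans)
  define v where "v = (1 / lam) *\<^sub>R (z - y)"
  have "v - vb = (1 / lam) *\<^sub>R (d - (y - xb))"
    unfolding v_def d_def using \<open>0 < lam\<close> by (simp add: algebra_simps)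
  then have "norm (v - vb) \<le> (norm d + norm (y - xb)) / lam"
    using \<open>0 < lam\<close> norm_triangle_ineq4[of d "y - xb"] by (simp add: divide_right_mono)
  also have "\<dots> < \<eta>"
    using localization(1) \<open>5 * norm d < lam * \<eta>\<close> \<open>0 < lam\<close> by (simp add: field_simps)
  finally have "v \<in> ball vb \<eta>"
    by (simp add: dist_norm norm_minus_commute)
  moreover have "v \<in> limiting_subdiff f y"
    using prox_map_imp_prox_subdiff[OF \<open>0 < lam\<close> \<open>proper_fun f\<close> y] \<open>proper_fun f\<close> \<open>0 < lam\<close>
    unfolding v_def proper_fun_def
    by (blast intro: frechet_subdiff_imp_limiting_subdiff prox_subdiff_imp_frechet_subdiff)
  ultimately show "(1 / lam) *\<^sub>R (z - y) \<in> limiting_subdiff \<phi> y \<and> f y = \<phi> y"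
    using model_subdiff[OF \<open>y \<in> ball xb \<rho>\<close> \<open>f y < f xb + ereal \<epsilon>\<close>] unfolding v_def by blast
qed

lemma prox_resolvent_strongly_monotone:
  assumes "0 < lam" and "(1 / lam) *\<^sub>R (z1 - y1) \<in> limiting_subdiff \<phi> y1"
    and "(1 / lam) *\<^sub>R (z2 - y2) \<in> limiting_subdiff \<phi> y2"
  shows "(1 + lam * \<sigma>) * (norm (y1 - y2))\<^sup>2 \<le> inner (z1 - z2) (y1 - y2)"
proof -
  have "\<sigma> * (norm (y1 - y2))\<^sup>2 \<le> inner ((1 / lam) *\<^sub>R (z1 - y1) - (1 / lam) *\<^sub>R (z2 - y2)) (y1 - y2)"
    by (rule limiting_subdiff_strongly_monotone[OF model_strongly_convex model_not_minf
          modulus_nonneg assms(2,3)])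
  also have "(1 / lam) *\<^sub>R (z1 - y1) - (1 / lam) *\<^sub>R (z2 - y2) = (1 / lam) *\<^sub>R ((z1 - z2) - (y1 - y2))"
    by (simp add: algebra_simps)
  also have "inner \<dots> (y1 - y2) = (inner (z1 - z2) (y1 - y2) - (norm (y1 - y2))\<^sup>2) / lam"
    by (simp add: power2_norm_eq_inner inner_diff_left)
  finally show ?thesis
    using \<open>0 < lam\<close> by (simp add: field_simps)
qed

lemma prox_map_strongly_monotone_near_xb:
  assumes "proper_fun f" "vb \<in> prox_subdiff mu f xb" "0 < lam" "2 * lam \<le> mu"
  obtains \<delta> where "0 < \<delta>"
    "\<And>z1 z2 y1 y2. norm (z1 - (xb + lam *\<^sub>R vb)) < \<delta> \<Longrightarrow> norm (z2 - (xb + lam *\<^sub>R vb)) < \<delta> \<Longrightarrow>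
      y1 \<in> prox_map lam f z1 \<Longrightarrow> y2 \<in> prox_map lam f z2 \<Longrightarrow>
      (1 + lam * \<sigma>) * (norm (y1 - y2))\<^sup>2 \<le> inner (z1 - z2) (y1 - y2)"
proof -
  obtain \<delta> where "0 < \<delta>" and near: "\<And>z y. norm (z - (xb + lam *\<^sub>R vb)) < \<delta> \<Longrightarrow> y \<in> prox_map lam f z \<Longrightarrow>
      (1 / lam) *\<^sub>R (z - y) \<in> limiting_subdiff \<phi> y \<and> f y = \<phi> y"
    using prox_map_near_xb[OF assms] by blast
  show thesis
  proof (rule that[OF \<open>0 < \<delta>\<close>])
    fix z1 z2 y1 y2
    assume "norm (z1 - (xb + lam *\<^sub>R vb)) < \<delta>" "norm (z2 - (xb + lam *\<^sub>R vb)) < \<delta>"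
      "y1 \<in> prox_map lam f z1" "y2 \<in> prox_map lam f z2"
    then show "(1 + lam * \<sigma>) * (norm (y1 - y2))\<^sup>2 \<le> inner (z1 - z2) (y1 - y2)"
      using prox_resolvent_strongly_monotone[OF \<open>0 < lam\<close>] near by blast
  qed
qed

end

lemma prox_map_single_valued_near_xb:
  fixes f :: "'a::euclidean_space \<Rightarrow> ereal"
  assumes model: "local_convex_model f \<phi> xb vb \<sigma> \<rho> \<eta> \<epsilon>" and "proper_fun f" "lsc_fun f"
    and vb: "vb \<in> prox_subdiff mu f xb" and "0 < lam" "2 * lam \<le> mu"
  defines "zb \<equiv> xb + lam *\<^sub>R vb"
  obtains \<delta> P where "0 < \<delta>" "P zb = xb"
    "\<And>z. norm (z - zb) < \<delta> \<Longrightarrow> prox_map lam f z = {P z}"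
    "\<And>z1 z2. norm (z1 - zb) < \<delta> \<Longrightarrow> norm (z2 - zb) < \<delta> \<Longrightarrow>
      (1 + lam * \<sigma>) * (norm (P z1 - P z2))\<^sup>2 \<le> inner (z1 - z2) (P z1 - P z2)"
proof -
  interpret local_convex_model f \<phi> xb vb \<sigma> \<rho> \<eta> \<epsilon>
    by (fact model)
  obtain fb where fb: "f xb = ereal fb"
    using model_finite_at_xb by (cases "f xb") auto
  obtain \<delta> where "0 < \<delta>" and mono: "\<And>z1 z2 y1 y2. norm (z1 - zb) < \<delta> \<Longrightarrow> norm (z2 - zb) < \<delta> \<Longrightarrow>
      y1 \<in> prox_map lam f z1 \<Longrightarrow> y2 \<in> prox_map lam f z2 \<Longrightarrow>
      (1 + lam * \<sigma>) * (norm (y1 - y2))\<^sup>2 \<le> inner (z1 - z2) (y1 - y2)"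
    unfolding zb_def
    by (rule prox_map_strongly_monotone_near_xb[OF \<open>proper_fun f\<close> vb \<open>0 < lam\<close> \<open>2 * lam \<le> mu\<close>])
      blast
  define P where "P z = (SOME y. y \<in> prox_map lam f z)" for z
  have P: "P z \<in> prox_map lam f z" for z
    using prox_map_nonempty[OF \<open>lsc_fun f\<close> \<open>proper_fun f\<close> fb vb \<open>0 < lam\<close> \<open>2 * lam \<le> mu\<close>]
    unfolding P_def by (simp add: some_in_eq)
  have single: "prox_map lam f z = {P z}" if "norm (z - zb) < \<delta>" for z
  proof -
    have "0 < 1 + lam * \<sigma>"
      using \<open>0 < lam\<close> modulus_nonneg by (simp add: add_pos_nonneg)
    have "y = P z" if "y \<in> prox_map lam f z" for y
    proof -
      have "(1 + lam * \<sigma>) * (norm (y - P z))\<^sup>2 \<le> 0"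
        using mono[OF \<open>norm (z - zb) < \<delta>\<close> \<open>norm (z - zb) < \<delta>\<close> that P] by simp
      with \<open>0 < 1 + lam * \<sigma>\<close> show ?thesis
        by (simp add: mult_le_0_iff)
    qed
    with P[of z] show ?thesis
      by blast
  qed
  have "P zb = xb"
    using P[of zb] prox_map_at_prox_subgradient[OF fb vb \<open>0 < lam\<close> \<open>2 * lam \<le> mu\<close>]
    unfolding zb_def by simp
  show thesis
    by (rule that[OF \<open>0 < \<delta>\<close> \<open>P zb = xb\<close> single mono[OF _ _ P P]])
qed

lemma forward_backward_operator_near_xb:
  fixes f :: "'a::euclidean_space \<Rightarrow> ereal"
  assumes model: "local_convex_model f \<phi> xb (- G xb) \<sigma> \<rho> \<eta> \<epsilon>"
    and "proper_fun f" "lsc_fun f"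
    and coc: "\<And>x y. \<beta> * (norm (G x - G y))\<^sup>2 \<le> inner (G x - G y) (x - y)"
    and vb: "- G xb \<in> prox_subdiff mu f xb" and "0 < lam" "lam \<le> \<beta>" "2 * lam \<le> mu"
  obtains \<delta> T where "0 < \<delta>" "T xb = xb"
    "\<And>x. x \<in> ball xb \<delta> \<Longrightarrow> prox_map lam f (x - lam *\<^sub>R G x) = {T x}"
    "two_thirds_averaged_on T (ball xb \<delta>)"
    "\<And>x. x \<in> ball xb \<delta> \<Longrightarrow> norm (T x - xb) \<le> norm (x - xb) / (1 + lam * \<sigma>)"
proof -
  let ?zb = "xb - lam *\<^sub>R G xb"
  have zb: "xb + lam *\<^sub>R (- G xb) = ?zb"
    by simp
  obtain \<delta> P where "0 < \<delta>" "P ?zb = xb"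
    and prox: "\<And>z. norm (z - ?zb) < \<delta> \<Longrightarrow> prox_map lam f z = {P z}"
    and mono: "\<And>z1 z2. norm (z1 - ?zb) < \<delta> \<Longrightarrow> norm (z2 - ?zb) < \<delta> \<Longrightarrow>
      (1 + lam * \<sigma>) * (norm (P z1 - P z2))\<^sup>2 \<le> inner (z1 - z2) (P z1 - P z2)"
    by (rule prox_map_single_valued_near_xb[OF model \<open>proper_fun f\<close> \<open>lsc_fun f\<close> vb \<open>0 < lam\<close>
        \<open>2 * lam \<le> mu\<close>, unfolded zb]) blast
  have "0 \<le> \<sigma>"
    using model by (rule local_convex_model.modulus_nonneg)
  define T where "T x = P (x - lam *\<^sub>R G x)" for x
  have fwd: "norm ((x - lam *\<^sub>R G x) - ?zb) \<le> norm (x - xb)" for x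
    by (rule cocoercive_forward_step_nonexpansive[OF coc \<open>0 < lam\<close> \<open>lam \<le> \<beta>\<close>])
  then have near: "norm ((x - lam *\<^sub>R G x) - ?zb) < \<delta>" if "x \<in> ball xb \<delta>" for x
    using that by (smt (verit) dist_norm mem_ball norm_minus_commute)
  show thesis
  proof
    show "0 < \<delta>" "T xb = xb"
      using \<open>0 < \<delta>\<close> \<open>P ?zb = xb\<close> unfolding T_def by simp_all
    show "prox_map lam f (x - lam *\<^sub>R G x) = {T x}" if "x \<in> ball xb \<delta>" for x
      unfolding T_def by (rule prox[OF near[OF that]])
    show "two_thirds_averaged_on T (ball xb \<delta>)"
      unfolding two_thirds_averaged_on_def
    proof (intro ballI)
      fix x y assume "x \<in> ball xb \<delta>" "y \<in> ball xb \<delta>"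
      have "(norm (T x - T y))\<^sup>2 \<le> (1 + lam * \<sigma>) * (norm (T x - T y))\<^sup>2"
        using \<open>0 < lam\<close> \<open>0 \<le> \<sigma>\<close> by (simp add: distrib_right)
      also have "\<dots> \<le> inner ((x - y) - lam *\<^sub>R (G x - G y)) (T x - T y)"
        using mono[OF near near, OF \<open>x \<in> ball xb \<delta>\<close> \<open>y \<in> ball xb \<delta>\<close>]
        unfolding T_def by (simp add: algebra_simps)
      finally show "3 * (norm (T x - T y))\<^sup>2 \<le> (norm (x - y))\<^sup>2 + 2 * inner (T x - T y) (x - y)"
        by (rule firm_forward_two_thirds_ineq[OF _ coc \<open>0 < lam\<close> \<open>lam \<le> \<beta>\<close>])
    qed
    show "norm (T x - xb) \<le> norm (x - xb) / (1 + lam * \<sigma>)" if "x \<in> ball xb \<delta>" for x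
    proof -
      have "(1 + lam * \<sigma>) * (norm (T x - xb))\<^sup>2 \<le> inner ((x - lam *\<^sub>R G x) - ?zb) (T x - xb)"
        using mono[OF near[OF that], of ?zb] \<open>0 < \<delta>\<close> \<open>P ?zb = xb\<close> unfolding T_def by simp
      then have "norm (T x - xb) \<le> norm ((x - lam *\<^sub>R G x) - ?zb) / (1 + lam * \<sigma>)"
        using \<open>0 < lam\<close> \<open>0 \<le> \<sigma>\<close> by (intro strongly_monotone_norm_bound) auto
      also have "\<dots> \<le> norm (x - xb) / (1 + lam * \<sigma>)"
        using fwd[of x] \<open>0 < lam\<close> \<open>0 \<le> \<sigma>\<close> by (intro divide_right_mono) auto
      finally show ?thesis .
    qed
  qed
qed

section \<open>The forward-backward iteration\<close>

lemma fb_seq_iterates: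
  assumes prox: "\<And>x. x \<in> U \<Longrightarrow> prox_map lam f (x - lam *\<^sub>R G x) = {T x}"
    and maps: "\<And>x. x \<in> U \<Longrightarrow> T x \<in> U"
    and "xs 0 \<in> U" and seq: "fb_seq lam f G xs"
  shows "xs (Suc k) = T (xs k)"
proof -
  have "xs k \<in> U \<and> xs (Suc k) = T (xs k)" for k
  proof (induction k)
    case 0
    then show ?case
      using prox[OF \<open>xs 0 \<in> U\<close>] seq \<open>xs 0 \<in> U\<close> unfolding fb_seq_def by simp
  next
    case (Suc k)
    then have "xs (Suc k) \<in> U"
      using maps by simp
    moreover have "prox_map lam f (xs (Suc k) - lam *\<^sub>R G (xs (Suc k))) = {xs (Suc (Suc k))}"
      using seq unfolding fb_seq_def by blast
    ultimately show ?case
      using prox by simp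
  qed
  then show ?thesis by blast
qed

lemma fb_averaged_on_ballI:
  assumes prox: "\<And>x. x \<in> ball c r \<Longrightarrow> prox_map lam f (x - lam *\<^sub>R G x) = {T x}"
    and "T c = c" and avg: "two_thirds_averaged_on T (ball c r)"
  shows "fb_averaged_on lam f G (ball c r)"
  unfolding fb_averaged_on_def
proof (intro conjI exI[of _ "2 / 3"] exI[of _ "\<lambda>x. (3 / 2) *\<^sub>R T x - (1 / 2) *\<^sub>R x"])
  show "\<forall>x\<in>ball c r. \<exists>y\<in>ball c r. prox_map lam f (x - lam *\<^sub>R G x) = {y}"
    using prox two_thirds_averaged_on_ball_maps[OF avg \<open>T c = c\<close>] by blast
  show "\<forall>x\<in>ball c r. \<forall>y\<in>ball c r. norm ((3 / 2) *\<^sub>R T x - (1 / 2) *\<^sub>R x - ((3 / 2) *\<^sub>R T y - (1 / 2) *\<^sub>R y))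
      \<le> norm (x - y)"
    using two_thirds_averaged_on_decompose(1)[OF avg] by blast
  show "\<forall>x\<in>ball c r. prox_map lam f (x - lam *\<^sub>R G x)
      = {(1 - 2 / 3) *\<^sub>R x + (2 / 3) *\<^sub>R ((3 / 2) *\<^sub>R T x - (1 / 2) *\<^sub>R x)}"
    using prox two_thirds_averaged_on_decompose(2)[OF avg] by simp
qed simp_all

lemma fb_seq_converges_on_ball:
  fixes f :: "'a::euclidean_space \<Rightarrow> ereal"
  assumes prox: "\<And>x. x \<in> ball c r \<Longrightarrow> prox_map lam f (x - lam *\<^sub>R G x) = {T x}"
    and "T c = c" and avg: "two_thirds_averaged_on T (ball c r)" and "0 < lam" "proper_fun f"
    and "xs 0 \<in> ball c r" "fb_seq lam f G xs"
  shows "\<exists>xst\<in>ball c r. xs \<longlonglongrightarrow> xst \<and> - G xst \<in> prox_subdiff lam f xst"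
proof -
  interpret two_thirds_averaged_iteration T c r xs
    using fb_seq_iterates[OF prox two_thirds_averaged_on_ball_maps[OF avg \<open>T c = c\<close>]] assms
    by unfold_locales blast+
  obtain l where "l \<in> ball c r" "xs \<longlonglongrightarrow> l" "T l = l"
    using converges_to_fixed_point by blast
  then have "l \<in> prox_map lam f (l - lam *\<^sub>R G l)"
    using prox by simp
  from prox_map_imp_prox_subdiff[OF \<open>0 < lam\<close> \<open>proper_fun f\<close> this]
  have "- G l \<in> prox_subdiff lam f l"
    using \<open>0 < lam\<close> by simp
  with \<open>l \<in> ball c r\<close> \<open>xs \<longlonglongrightarrow> l\<close> show ?thesis
    by blast
qed

lemma fb_seq_linear_on_ball:
  assumes prox: "\<And>x. x \<in> ball c r \<Longrightarrow> prox_map lam f (x - lam *\<^sub>R G x) = {T x}"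
    and contr: "\<And>x. x \<in> ball c r \<Longrightarrow> norm (T x - c) \<le> q * norm (x - c)" and "0 \<le> q" "q < 1"
    and "xs 0 \<in> ball c r" "fb_seq lam f G xs"
  shows "xs \<longlonglongrightarrow> c \<and> (\<forall>k. norm (xs (Suc k) - c) \<le> q * norm (xs k - c))"
proof -
  have "T x \<in> ball c r" if "x \<in> ball c r" for x
  proof -
    have "norm (T x - c) \<le> norm (x - c)"
      using contr[OF that] \<open>0 \<le> q\<close> \<open>q < 1\<close> mult_left_le_one_le[of "norm (x - c)" q] by simp
    then show ?thesis
      using that by (simp add: dist_norm norm_minus_commute)
  qed
  then have "\<And>k. xs (Suc k) = T (xs k)"
    using fb_seq_iterates[OF prox] assms(5,6) by blast
  then show ?thesis
    using contraction_iteration_linear[where T = T and xs = xs, OF contr \<open>0 \<le> q\<close> \<open>q < 1\<close> \<open>xs 0 \<in> ball c r\<close>]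
    by blast
qed


lemma forward_backward_linear_rate:
  fixes f :: "'a::euclidean_space \<Rightarrow> ereal"
  assumes vsc: "var_strongly_convex f xb (- G xb)" and "proper_fun f" "lsc_fun f"
    and coc: "\<And>x y. \<beta> * (norm (G x - G y))\<^sup>2 \<le> inner (G x - G y) (x - y)"
    and vb: "- G xb \<in> prox_subdiff mu f xb" and "0 < lam" "lam \<le> \<beta>" "2 * lam \<le> mu" and "0 < r"
  shows "\<exists>U'. U' \<subseteq> ball xb r \<and> xb \<in> interior U' \<and> fb_averaged_on lam f G U' \<and>
    (\<exists>c. 0 \<le> c \<and> c < 1 \<and> (\<forall>xs. xs 0 \<in> U' \<and> fb_seq lam f G xs \<longrightarrow>
       xs \<longlonglongrightarrow> xb \<and> (\<forall>k. norm (xs (Suc k) - xb) \<le> c * norm (xs k - xb))))"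
proof -
  obtain \<phi> \<sigma> \<rho> \<eta> \<epsilon> where "0 < \<sigma>" and model: "local_convex_model f \<phi> xb (- G xb) \<sigma> \<rho> \<eta> \<epsilon>"
    using var_strongly_convex_imp_model[OF vsc \<open>proper_fun f\<close>] by blast
  obtain \<delta> T where "0 < \<delta>" "T xb = xb"
    and prox: "\<And>x. x \<in> ball xb \<delta> \<Longrightarrow> prox_map lam f (x - lam *\<^sub>R G x) = {T x}"
    and avg: "two_thirds_averaged_on T (ball xb \<delta>)"
    and contr: "\<And>x. x \<in> ball xb \<delta> \<Longrightarrow> norm (T x - xb) \<le> norm (x - xb) / (1 + lam * \<sigma>)"
    by (rule forward_backward_operator_near_xb[OF model \<open>proper_fun f\<close> \<open>lsc_fun f\<close> coc vb
          \<open>0 < lam\<close> \<open>lam \<le> \<beta>\<close> \<open>2 * lam \<le> mu\<close>]) blast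
  define r' where "r' = min r \<delta>"
  define c where "c = 1 / (1 + lam * \<sigma>)"
  have "0 \<le> c" "c < 1"
    unfolding c_def using \<open>0 < lam\<close> \<open>0 < \<sigma>\<close> by (simp_all add: add_pos_pos)
  have sub: "ball xb r' \<subseteq> ball xb \<delta>"
    unfolding r'_def by auto
  have contr': "norm (T x - xb) \<le> c * norm (x - xb)" if "x \<in> ball xb r'" for x
    using contr[of x] that sub unfolding c_def by auto
  show ?thesis
  proof (intro exI[of _ "ball xb r'"] conjI exI[of _ c] allI impI)
    show "ball xb r' \<subseteq> ball xb r" "xb \<in> interior (ball xb r')"
      unfolding r'_def using \<open>0 < r\<close> \<open>0 < \<delta>\<close> by auto
    show "fb_averaged_on lam f G (ball xb r')"
      using sub prox \<open>T xb = xb\<close> two_thirds_averaged_on_subset[OF avg sub]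
      by (intro fb_averaged_on_ballI[where T = T]) auto
    show "0 \<le> c" "c < 1" by fact+
    fix xs assume "xs 0 \<in> ball xb r' \<and> fb_seq lam f G xs"
    then have "xs \<longlonglongrightarrow> xb \<and> (\<forall>k. norm (xs (Suc k) - xb) \<le> c * norm (xs k - xb))"
      using sub prox by (intro fb_seq_linear_on_ball[OF _ contr' \<open>0 \<le> c\<close> \<open>c < 1\<close>]) auto
    then show "xs \<longlonglongrightarrow> xb" "norm (xs (Suc k) - xb) \<le> c * norm (xs k - xb)" for k
      by auto
  qed
qed


lemma forward_backward_local_convergence:
  fixes f :: "'a::euclidean_space \<Rightarrow> ereal"
  assumes vc: "var_convex f xb (- G xb)" and "proper_fun f" "lsc_fun f"
    and coc: "\<And>x y. \<beta> * (norm (G x - G y))\<^sup>2 \<le> inner (G x - G y) (x - y)"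
    and vb: "- G xb \<in> prox_subdiff mu f xb" and "0 < lam" "lam \<le> \<beta>" "2 * lam \<le> mu"
  shows "\<exists>U. xb \<in> interior U \<and> fb_averaged_on lam f G U \<and>
    prox_map lam f (xb - lam *\<^sub>R G xb) = {xb} \<and>
    (\<forall>xs. xs 0 \<in> U \<and> fb_seq lam f G xs \<longrightarrow>
       (\<exists>xst\<in>U. xs \<longlonglongrightarrow> xst \<and> - G xst \<in> prox_subdiff lam f xst)) \<and>
    (var_strongly_convex f xb (- G xb) \<longrightarrow>
       (\<exists>U'. U' \<subseteq> U \<and> xb \<in> interior U' \<and> fb_averaged_on lam f G U' \<and>
          (\<exists>c. 0 \<le> c \<and> c < 1 \<and> (\<forall>xs. xs 0 \<in> U' \<and> fb_seq lam f G xs \<longrightarrow>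
             xs \<longlonglongrightarrow> xb \<and> (\<forall>k. norm (xs (Suc k) - xb) \<le> c * norm (xs k - xb))))))"
proof -
  obtain \<phi> \<rho> \<eta> \<epsilon> where model: "local_convex_model f \<phi> xb (- G xb) 0 \<rho> \<eta> \<epsilon>"
    using var_convex_imp_model[OF vc \<open>proper_fun f\<close>] by blast
  obtain \<delta> T where "0 < \<delta>" "T xb = xb"
    and prox: "\<And>x. x \<in> ball xb \<delta> \<Longrightarrow> prox_map lam f (x - lam *\<^sub>R G x) = {T x}"
    and avg: "two_thirds_averaged_on T (ball xb \<delta>)"
    by (rule forward_backward_operator_near_xb[OF model \<open>proper_fun f\<close> \<open>lsc_fun f\<close> coc vb
          \<open>0 < lam\<close> \<open>lam \<le> \<beta>\<close> \<open>2 * lam \<le> mu\<close>]) blast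
  show ?thesis
  proof (rule exI[of _ "ball xb \<delta>"], intro conjI allI impI; (elim conjE)?)
    show "xb \<in> interior (ball xb \<delta>)"
      using \<open>0 < \<delta>\<close> by simp
    show "fb_averaged_on lam f G (ball xb \<delta>)"
      by (rule fb_averaged_on_ballI[OF prox \<open>T xb = xb\<close> avg])
    show "prox_map lam f (xb - lam *\<^sub>R G xb) = {xb}"
      using prox[of xb] \<open>0 < \<delta>\<close> \<open>T xb = xb\<close> by simp
    show "\<exists>xst\<in>ball xb \<delta>. xs \<longlonglongrightarrow> xst \<and> - G xst \<in> prox_subdiff lam f xst"
      if "xs 0 \<in> ball xb \<delta>" "fb_seq lam f G xs" for xs
      using fb_seq_converges_on_ball[OF prox \<open>T xb = xb\<close> avg \<open>0 < lam\<close> \<open>proper_fun f\<close>] that by blast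
  qed (use forward_backward_linear_rate[OF _ \<open>proper_fun f\<close> \<open>lsc_fun f\<close> coc vb \<open>0 < lam\<close>
      \<open>lam \<le> \<beta>\<close> \<open>2 * lam \<le> mu\<close> \<open>0 < \<delta>\<close>] in blast)
qed

theorem mainTheorem4:
  fixes f :: "'a::euclidean_space \<Rightarrow> ereal" and g :: "'a \<Rightarrow> real"
    and G :: "'a \<Rightarrow> 'a" and xb :: 'a
  assumes f_proper: "proper_fun f" and f_lsc: "lsc_fun f"
    and f_pb: "prox_bounded f" and f_thr: "prox_threshold f > 0"
    and g_convex: "convex_on UNIV g"
    and g_grad: "\<And>x. (g has_derivative (\<lambda>h. inner (G x) h)) (at x)"
    and G_lip: "\<exists>L. \<forall>x y. norm (G x - G y) \<le> L * norm (x - y)"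
    and vc: "var_convex f xb (- G xb)"
  shows "(\<exists>\<delta>>0. \<forall>x. norm (x - xb) < \<delta> \<longrightarrow> f xb + ereal (g xb) \<le> f x + ereal (g x))
    \<and> (\<exists>lamb. 0 < lamb \<and> ereal lamb \<le> prox_threshold f \<and>
        (\<forall>lam. 0 < lam \<and> lam < lamb \<longrightarrow>
          (\<exists>U. xb \<in> interior U \<and> fb_averaged_on lam f G U \<and>
                prox_map lam f (xb - lam *\<^sub>R G xb) = {xb} \<and>
                (\<forall>xs. xs 0 \<in> U \<and> fb_seq lam f G xs \<longrightarrow>
                   (\<exists>xst\<in>U. xs \<longlonglongrightarrow> xst \<and> - G xst \<in> prox_subdiff lam f xst)) \<and>
                (var_strongly_convex f xb (- G xb) \<longrightarrow>
                   (\<exists>U'. U' \<subseteq> U \<and> xb \<in> interior U' \<and> fb_averaged_on lam f G U' \<and>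
                      (\<exists>c. 0 \<le> c \<and> c < 1 \<and>
                         (\<forall>xs. xs 0 \<in> U' \<and> fb_seq lam f G xs \<longrightarrow>
                            xs \<longlonglongrightarrow> xb \<and>
                            (\<forall>k. norm (xs (Suc k) - xb) \<le> c * norm (xs k - xb)))))))))"
proof -
  obtain \<phi> \<rho> \<eta> \<epsilon> where "local_convex_model f \<phi> xb (- G xb) 0 \<rho> \<eta> \<epsilon>"
    using var_convex_imp_model[OF vc f_proper] by blast
  then interpret local_convex_model f \<phi> xb "- G xb" 0 \<rho> \<eta> \<epsilon> .
  have local_min: "\<exists>\<delta>>0. \<forall>x. norm (x - xb) < \<delta> \<longrightarrow> f xb + ereal (g xb) \<le> f x + ereal (g x)"
    using convex_on_gradient_ineq[OF g_convex g_grad] by (intro local_minimizer) simp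
  obtain mu where "0 < mu" "ereal mu \<le> prox_threshold f"
    and vb: "- G xb \<in> prox_subdiff mu f xb"
    by (rule prox_subgradient_at_xb[OF f_pb])
  moreover obtain \<beta> where "0 < \<beta>"
    and coc: "\<And>x y. \<beta> * (norm (G x - G y))\<^sup>2 \<le> inner (G x - G y) (x - y)"
    using convex_lipschitz_gradient_cocoercive[OF g_convex g_grad G_lip] by blast
  moreover have "ereal (min (mu / 2) \<beta>) \<le> ereal mu"
    using \<open>0 < mu\<close> by (simp add: min_le_iff_disj)
  ultimately show ?thesis
    using forward_backward_local_convergence[OF vc f_proper f_lsc coc vb]
    by (intro conjI[OF local_min] exI[of _ "min (mu / 2) \<beta>"] allI impI; (elim conjE)?)
      (auto intro: order_trans)
qed

end
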